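(* (General Lift.) Fix a dimension $d$ and a geometric construction in $d$-dimensional space producing elements $q_1,\ldots,q_s$ from input elements $p_1,\ldots,p_N$, where each step is either the (stable) join of $d$ previously obtained points into a hyperplane or the (stable) intersection of $d$ previously obtained hyperplanes into a point, computed by Cramer's rule. Suppose this construction can be meaningfully performed in projective space over $\mathbb{K}$ by Cramer's rule, and suppose the construction of each $q_i$ is tropically admissible. Then for any specialization of the tropical input data, given by homogeneous coordinates $p_i=[p_i^1:\ldots:p_i^{m_i}]$ ($m_i=d+1$), $1\le i\le N$, there exists a nonempty set $U\subseteq(\mathbb{C}^* )^{m_1-1}\times\cdots\times(\mathbb{C}^* )^{m_N-1}$ (each factor viewed inside $\mathbb{P}^{m_i-1}(\mathbb{C})$ via homogeneous coordinates) such that: 1. for every $(x_1,\ldots,x_N)\in U$ there exist $P_1,\ldots,P_N$ with Puiseux series coordinates such that $T(P_i)=p_i$, $Pc(P_i)=x_i$, and the projective construction of $Q_1,\ldots,Q_s$ from $P_1,\ldots,P_N$ is meaningful; 2. for all $(P_1,\ldots,P_N)\in\mathbb{P}^{m_1-1}(\mathbb{K})\times\cdots\times\mathbb{P}^{m_N-1}(\mathbb{K})$ with $T(P_i)=p_i$ and $(Pc(P_1),\ldots,Pc(P_N))\in U$, the tropicalizations of the resulting elements $Q_1,\ldots,Q_s$ coincide with the tropical elements $q_1,\ldots,q_s$ obtained by the tropical construction using tropical determinants; in particular all such lifts yield the same tropical final elements.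
   Context: $\mathbb{K}$ is the field of Puiseux series with complex coefficients and real exponents; for $x\in\mathbb{K}^*$, $o(x)$ is its smallest exponent with nonzero coefficient, $T(x)=-o(x)$, and $Pc(x)$ is the coefficient of $t^{o(x)}$; for points/hyperplanes given by homogeneous coordinates, $T$ and $Pc$ are applied coordinatewise. $\mathbb{T}=(\mathbb{R},\max,+)$. Hyperplanes $\bigoplus_i a_i\odot x_i$ (tropical) or $\sum a_ix_i=0$ (classical) are identified with the point $[a_1:\dots:a_{d+1}]$ of the dual space. Tropical Cramer's rule: for an $n\times(n+1)$ tropical matrix $O$ (here $n=d$, rows being the homogeneous coordinates of the $d$ given points or hyperplanes), the output is $[\,|O^{1}|_t:\ldots:|O^{n+1}|_t\,]$, where $O^{i}$ is $O$ with column $i$ deleted and $|M|_t=\max_{\sigma}\sum_i m_{i\sigma(i)}$ is the tropical determinant; this gives the stable join of $d$ points / stable intersection of $d$ hyperplanes. The classical step uses classical Cramer's rule (signed maximal minors), and is meaningful when the resulting element is well defined. The construction graph of an element $P$ has as vertices all elements recursively used to construct $P$ (including $P$ and input elements), with an edge from each constructed element to each of the elements from which it is directly constructed. The construction of $P$ is tropically admissible if its construction graph is a tree. *)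

theory Defs
  imports Complex_Main "HOL-Combinatorics.Permutations"
begin

text \<open>A series sum_a c_a t^a is represented by its coefficient function
  real => complex. Membership in K: the support is bounded below and has no
  accumulation point in the reals, i.e. for each r only finitely many exponents
  are <= r (this makes the support well-ordered).\<close>

type_synonym ser = "real \<Rightarrow> complex"

definition is_puiseux :: "ser \<Rightarrow> bool" where
  "is_puiseux f \<longleftrightarrow> (\<forall>r. finite {a. f a \<noteq> 0 \<and> a \<le> r})"

definition szero :: ser where "szero = (\<lambda>_. 0)"
definition sone :: ser where "sone = (\<lambda>r. if r = 0 then 1 else 0)"
definition sadd :: "ser \<Rightarrow> ser \<Rightarrow> ser" where "sadd f g = (\<lambda>r. f r + g r)"
definition sneg :: "ser \<Rightarrow> ser" where "sneg f = (\<lambda>r. - f r)"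
definition smul :: "ser \<Rightarrow> ser \<Rightarrow> ser" where
  "smul f g = (\<lambda>r. \<Sum>a\<in>{a. f a \<noteq> 0 \<and> g (r - a) \<noteq> 0}. f a * g (r - a))"

definition ord_ser :: "ser \<Rightarrow> real" where "ord_ser f = (LEAST a. f a \<noteq> 0)"
definition trop :: "ser \<Rightarrow> real" where "trop f = - ord_ser f"
definition Pc :: "ser \<Rightarrow> complex" where "Pc f = f (ord_ser f)"

definition skip :: "nat \<Rightarrow> nat \<Rightarrow> nat" where
  "skip j c = (if c < j then c else Suc c)"

primrec detK :: "nat \<Rightarrow> (nat \<Rightarrow> nat \<Rightarrow> ser) \<Rightarrow> ser" where
  "detK 0 M = sone"
| "detK (Suc n) M =
     foldr sadd
       (map (\<lambda>j. smul (if even j then M 0 j else sneg (M 0 j))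
                        (detK n (\<lambda>r c. M (Suc r) (skip j c)))) [0..<Suc n]) szero"

definition cramerK :: "nat \<Rightarrow> (nat \<Rightarrow> ser) list \<Rightarrow> (nat \<Rightarrow> ser)" where
  "cramerK d rows = (\<lambda>i. if i \<le> d then
      (if even i then id else sneg) (detK d (\<lambda>r c. (rows ! r) (skip i c)))
    else szero)"

definition tdet :: "nat \<Rightarrow> (nat \<Rightarrow> nat \<Rightarrow> real) \<Rightarrow> real" where
  "tdet n M = Max {(\<Sum>i<n. M i (\<sigma> i)) | \<sigma>. \<sigma> permutes {..<n}}"

definition cramerT :: "nat \<Rightarrow> (nat \<Rightarrow> real) list \<Rightarrow> (nat \<Rightarrow> real)" where
  "cramerT d rows = (\<lambda>i. if i \<le> d then tdet d (\<lambda>r c. (rows ! r) (skip i c)) else 0)"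

text \<open>A construction with N inputs: elements are indexed by naturals; indices
  0..N-1 are the inputs, index N+j is produced by step j, which is the list
  C!j of the indices of the d previously obtained elements it is built from.
  kind k = True means element k is a point, False that it is a hyperplane.\<close>

definition wf_construction :: "nat \<Rightarrow> nat \<Rightarrow> nat list list \<Rightarrow> (nat \<Rightarrow> bool) \<Rightarrow> bool" where
  "wf_construction d N C kind \<longleftrightarrow>
     (\<forall>j<length C. length (C ! j) = d \<and>
        (\<forall>a\<in>set (C ! j). a < N + j \<and> kind a = (\<not> kind (N + j))))"

definition evalK :: "nat \<Rightarrow> nat \<Rightarrow> nat list list \<Rightarrow> (nat \<Rightarrow> nat \<Rightarrow> ser) \<Rightarrow> (nat \<Rightarrow> ser) list" where
  "evalK d N C P = foldl (\<lambda>acc args. acc @ [cramerK d (map (\<lambda>a. acc ! a) args)])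
                         (map P [0..<N]) C"

definition evalT :: "nat \<Rightarrow> nat \<Rightarrow> nat list list \<Rightarrow> (nat \<Rightarrow> nat \<Rightarrow> real) \<Rightarrow> (nat \<Rightarrow> real) list" where
  "evalT d N C p = foldl (\<lambda>acc args. acc @ [cramerT d (map (\<lambda>a. acc ! a) args)])
                         (map p [0..<N]) C"

definition proj_pointK :: "nat \<Rightarrow> (nat \<Rightarrow> ser) \<Rightarrow> bool" where
  "proj_pointK d v \<longleftrightarrow> (\<forall>j\<le>d. is_puiseux (v j)) \<and> (\<exists>j\<le>d. v j \<noteq> szero)"

definition meaningful :: "nat \<Rightarrow> nat \<Rightarrow> nat list list \<Rightarrow> (nat \<Rightarrow> nat \<Rightarrow> ser) \<Rightarrow> bool" where
  "meaningful d N C P \<longleftrightarrow>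
     (\<forall>k<length C. \<exists>j\<le>d. (evalK d N C P ! (N + k)) j \<noteq> szero)"

definition direct_rel :: "nat \<Rightarrow> nat list list \<Rightarrow> (nat \<times> nat) set" where
  "direct_rel N C = {(a, b). N \<le> a \<and> a < N + length C \<and> b \<in> set (C ! (a - N))}"

definition cg_vertices :: "nat \<Rightarrow> nat list list \<Rightarrow> nat \<Rightarrow> nat set" where
  "cg_vertices N C k = {v. (k, v) \<in> (direct_rel N C)\<^sup>*}"

definition cg_edges :: "nat \<Rightarrow> nat list list \<Rightarrow> nat \<Rightarrow> nat set set" where
  "cg_edges N C k = {{a, b} | a b. a \<in> cg_vertices N C k \<and> (a, b) \<in> direct_rel N C}"

definition is_tree :: "'v set \<Rightarrow> 'v set set \<Rightarrow> bool" where
  "is_tree V E \<longleftrightarrow>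
     (\<forall>u\<in>V. \<forall>v\<in>V. (u, v) \<in> {(x, y). {x, y} \<in> E}\<^sup>*) \<and>
     \<not> (\<exists>vs. length vs \<ge> 3 \<and> distinct vs \<and> set vs \<subseteq> V \<and>
            (\<forall>i<length vs. {vs ! i, vs ! ((i + 1) mod length vs)} \<in> E))"

definition trop_admissible :: "nat \<Rightarrow> nat list list \<Rightarrow> nat \<Rightarrow> bool" where
  "trop_admissible N C k \<longleftrightarrow> is_tree (cg_vertices N C k) (cg_edges N C k)"

definition trop_proj_eq :: "nat \<Rightarrow> (nat \<Rightarrow> real) \<Rightarrow> (nat \<Rightarrow> real) \<Rightarrow> bool" where
  "trop_proj_eq d a b \<longleftrightarrow> (\<exists>c. \<forall>j\<le>d. a j = b j + c)"

definition cproj_eq :: "nat \<Rightarrow> (nat \<Rightarrow> complex) \<Rightarrow> (nat \<Rightarrow> complex) \<Rightarrow> bool" where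
  "cproj_eq d a b \<longleftrightarrow> (\<exists>s. s \<noteq> 0 \<and> (\<forall>j\<le>d. a j = s * b j))"

definition torus_hom :: "(nat \<Rightarrow> complex) \<Rightarrow> (nat \<Rightarrow> complex)" where
  "torus_hom x = (\<lambda>j. if j = 0 then 1 else x (j - 1))"

text \<open>tuples (x_1,...,x_N) in ((C^* )^d)^N, stored canonically\<close>
definition torus_tuples :: "nat \<Rightarrow> nat \<Rightarrow> (nat \<Rightarrow> nat \<Rightarrow> complex) set" where
  "torus_tuples d N = {x. \<forall>i j. (i < N \<and> j < d \<longrightarrow> x i j \<noteq> 0) \<and>
                                 (\<not> (i < N \<and> j < d) \<longrightarrow> x i j = 0)}"

definition is_lift :: "nat \<Rightarrow> nat \<Rightarrow> (nat \<Rightarrow> nat \<Rightarrow> ser) \<Rightarrow> (nat \<Rightarrow> nat \<Rightarrow> real) \<Rightarrow> bool" where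
  "is_lift d N P p \<longleftrightarrow>
     (\<forall>i<N. proj_pointK d (P i) \<and> (\<forall>j\<le>d. P i j \<noteq> szero) \<and>
            trop_proj_eq d (\<lambda>j. trop (P i j)) (p i))"

definition has_Pc :: "nat \<Rightarrow> nat \<Rightarrow> (nat \<Rightarrow> nat \<Rightarrow> ser) \<Rightarrow> (nat \<Rightarrow> nat \<Rightarrow> complex) \<Rightarrow> bool" where
  "has_Pc d N P x \<longleftrightarrow> (\<forall>i<N. cproj_eq d (\<lambda>j. Pc (P i j)) (torus_hom (x i)))"

end

(*
  Every coordinate of a constructed element is, up to sign, a maximal minor whose entries are
  coordinates of earlier elements. If every entry is c t^(-T) plus terms of higher order, the
  lowest-order term of the minor comes from the permutations attaining the tropical determinant
  of the T's. Following the construction, each constructed element therefore tropicalizes to the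
  element given by tropical Cramer's rule, as long as the coefficient of that lowest-order term,
  a polynomial "initial form" in the leading coefficients x of the input lifts, does not vanish;
  U is the set of x at which no initial form vanishes.

  U is nonempty because the initial forms are nonzero polynomials. Substitute M^(j (d+1)^i) for
  coordinate j of input i: the degree of a term then records in base d + 1 which coordinate of
  each input it uses. The arguments of a step are distinct (otherwise the minors vanish and the
  construction could not be performed), so when the construction graph is a tree they depend on
  disjoint sets of inputs, and distinct optimal permutations give terms of distinct degrees. The
  term of highest degree cannot cancel.
*)
theory Submission
  imports Defs "Jordan_Normal_Form.Determinant" "HOL-Computational_Algebra.Polynomial"
begin

section \<open>The ring of Puiseux series\<close>

lemma is_puiseux_support_has_min:
  assumes "is_puiseux f" "f a0 \<noteq> 0"
  obtains m where "f m \<noteq> 0" "\<And>a. f a \<noteq> 0 \<Longrightarrow> m \<le> a"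
proof -
  let ?S = "{a. f a \<noteq> 0 \<and> a \<le> a0}"
  have S: "finite ?S" "a0 \<in> ?S" using assms unfolding is_puiseux_def by auto
  show ?thesis
  proof
    show "f (Min ?S) \<noteq> 0" using Min_in[OF S(1)] S(2) by blast
    show "Min ?S \<le> a" if "f a \<noteq> 0" for a
      using Min_le[OF S(1)] S(2) that by (cases "a \<le> a0") force+
  qed
qed

lemma is_puiseux_bounded_below:
  assumes "is_puiseux f"
  obtains m where "\<And>a. f a \<noteq> 0 \<Longrightarrow> m \<le> a"
proof (cases "\<exists>a0. f a0 \<noteq> 0")
  case True
  then obtain a0 where "f a0 \<noteq> 0" by blast
  from is_puiseux_support_has_min[OF assms this] that show ?thesis by blast
qed (use that in auto)

lemma finite_conv_support:
  assumes "is_puiseux f" "is_puiseux g"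
  shows "finite {a. f a \<noteq> 0 \<and> g (r - a) \<noteq> 0}"
proof -
  obtain m where m: "\<And>b. g b \<noteq> 0 \<Longrightarrow> m \<le> b" using is_puiseux_bounded_below[OF assms(2)] by blast
  have "{a. f a \<noteq> 0 \<and> g (r - a) \<noteq> 0} \<subseteq> {a. f a \<noteq> 0 \<and> a \<le> r - m}" using m by force
  then show ?thesis by (rule finite_subset) (use assms(1) in \<open>simp add: is_puiseux_def\<close>)
qed

lemma smul_eq_sum:
  assumes "finite A" "{a. f a \<noteq> 0 \<and> g (r - a) \<noteq> 0} \<subseteq> A"
  shows "smul f g r = (\<Sum>a\<in>A. f a * g (r - a))"
  unfolding smul_def by (rule sum.mono_neutral_left) (use assms in auto)

lemma smul_nonzeroE:
  assumes "smul f g r \<noteq> 0"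
  obtains a where "f a \<noteq> 0" "g (r - a) \<noteq> 0"
  using assms unfolding smul_def by (metis (mono_tags, lifting) empty_Collect_eq sum.empty)

lemma smul_commute: "smul f g = smul g f"
proof
  fix r
  show "smul f g r = smul g f r"
    unfolding smul_def
    by (rule sum.reindex_bij_witness[where i="\<lambda>b. r - b" and j="\<lambda>a. r - a"]) auto
qed

lemma smul_sone: "smul sone f = f"
proof
  fix r
  have "smul sone f r = (\<Sum>a\<in>{0}. sone a * f (r - a))"
    by (rule smul_eq_sum) (auto simp: sone_def)
  then show "smul sone f r = f r" by (simp add: sone_def)
qed

lemma smul_sneg_left: "smul (sneg f) g = sneg (smul f g)"
  unfolding smul_def sneg_def by (simp add: sum_negf)

lemma smul_sadd_left:
  assumes "is_puiseux f" "is_puiseux g" "is_puiseux h"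
  shows "smul (sadd f g) h = sadd (smul f h) (smul g h)"
proof
  fix r
  let ?A = "{a. f a \<noteq> 0 \<and> h (r - a) \<noteq> 0} \<union> {a. g a \<noteq> 0 \<and> h (r - a) \<noteq> 0}"
  have A: "finite ?A" using finite_conv_support assms by blast
  have "smul (sadd f g) h r = (\<Sum>a\<in>?A. sadd f g a * h (r - a))"
    by (rule smul_eq_sum[OF A]) (auto simp: sadd_def)
  moreover have "smul f h r = (\<Sum>a\<in>?A. f a * h (r - a))" "smul g h r = (\<Sum>a\<in>?A. g a * h (r - a))"
    by (rule smul_eq_sum[OF A]; auto)+
  ultimately show "smul (sadd f g) h r = sadd (smul f h) (smul g h) r"
    by (simp add: sadd_def distrib_right sum.distrib)
qed

lemma smul_smul_eq_sum:
  fixes r :: real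
  assumes f: "is_puiseux f" and g: "is_puiseux g" and h: "is_puiseux h"
  defines "T \<equiv> {(a, b). f a \<noteq> 0 \<and> g b \<noteq> 0 \<and> h (r - a - b) \<noteq> 0}"
  shows "smul (smul f g) h r = (\<Sum>(a, b)\<in>T. f a * g b * h (r - a - b))"
proof -
  obtain mf where mf: "\<And>a. f a \<noteq> 0 \<Longrightarrow> mf \<le> a" using is_puiseux_bounded_below[OF f] by blast
  obtain mg where mg: "\<And>a. g a \<noteq> 0 \<Longrightarrow> mg \<le> a" using is_puiseux_bounded_below[OF g] by blast
  obtain mh where mh: "\<And>a. h a \<noteq> 0 \<Longrightarrow> mh \<le> a" using is_puiseux_bounded_below[OF h] by blast
  have "T \<subseteq> {a. f a \<noteq> 0 \<and> a \<le> r - mg - mh} \<times> {b. g b \<noteq> 0 \<and> b \<le> r - mf - mh}"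
    unfolding T_def using mf mg mh by force
  then have T: "finite T"
    by (rule finite_subset) (use f g in \<open>simp add: is_puiseux_def\<close>)
  define E where "E = (\<lambda>(a, b). a + b) ` T"
  define A where "A e = {a. f a \<noteq> 0 \<and> g (e - a) \<noteq> 0 \<and> h (r - e) \<noteq> 0}" for e
  have E: "finite E" unfolding E_def using T by simp
  have "smul (smul f g) h r = (\<Sum>e\<in>E. smul f g e * h (r - e))"
  proof (rule smul_eq_sum[OF E], clarify)
    fix e assume "smul f g e \<noteq> 0" "h (r - e) \<noteq> 0"
    moreover obtain a where "f a \<noteq> 0" "g (e - a) \<noteq> 0"
      using smul_nonzeroE[OF \<open>smul f g e \<noteq> 0\<close>] .
    ultimately have "(a, e - a) \<in> T" unfolding T_def by simp
    then show "e \<in> E" unfolding E_def by force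
  qed
  also have "\<dots> = (\<Sum>e\<in>E. \<Sum>a\<in>A e. f a * g (e - a) * h (r - e))"
  proof (rule sum.cong)
    fix e
    show "smul f g e * h (r - e) = (\<Sum>a\<in>A e. f a * g (e - a) * h (r - e))"
      by (cases "h (r - e) = 0") (simp_all add: A_def smul_def sum_distrib_right)
  qed simp
  also have "\<dots> = (\<Sum>(e, a)\<in>Sigma E A. f a * g (e - a) * h (r - e))"
    by (rule sum.Sigma[OF E]) (auto simp: A_def intro: finite_subset[OF _ finite_conv_support[OF f g]])
  also have "\<dots> = (\<Sum>(a, b)\<in>T. f a * g b * h (r - a - b))"
    by (rule sum.reindex_bij_witness[where i="\<lambda>(a, b). (a + b, a)" and j="\<lambda>(e, a). (a, e - a)"])
       (auto simp: A_def T_def E_def diff_diff_eq)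
  finally show ?thesis .
qed

text \<open>Both sides are the sum of f a * g b * h c over the pairs (a, b) with c = r - a - b.\<close>

lemma smul_assoc:
  assumes f: "is_puiseux f" and g: "is_puiseux g" and h: "is_puiseux h"
  shows "smul (smul f g) h = smul f (smul g h)"
proof
  fix r
  have "smul f (smul g h) r = smul (smul g h) f r" by (simp add: smul_commute)
  also have "\<dots> = (\<Sum>(b, c)\<in>{(b, c). g b \<noteq> 0 \<and> h c \<noteq> 0 \<and> f (r - b - c) \<noteq> 0}. g b * h c * f (r - b - c))"
    using smul_smul_eq_sum[OF g h f] .
  also have "\<dots> = (\<Sum>(a, b)\<in>{(a, b). f a \<noteq> 0 \<and> g b \<noteq> 0 \<and> h (r - a - b) \<noteq> 0}. f a * g b * h (r - a - b))"
    by (rule sum.reindex_bij_witness[where i="\<lambda>(a, b). (b, r - a - b)" and j="\<lambda>(b, c). (r - b - c, b)"])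
       (auto simp: algebra_simps)
  also have "\<dots> = smul (smul f g) h r"
    using smul_smul_eq_sum[OF f g h] by simp
  finally show "smul (smul f g) h r = smul f (smul g h) r" ..
qed

lemma is_puiseux_szero: "is_puiseux szero"
  unfolding is_puiseux_def szero_def by auto

lemma is_puiseux_sone: "is_puiseux sone"
  unfolding is_puiseux_def sone_def by (auto intro: finite_subset[of _ "{0}"])

lemma is_puiseux_sadd: "is_puiseux f \<Longrightarrow> is_puiseux g \<Longrightarrow> is_puiseux (sadd f g)"
  unfolding is_puiseux_def sadd_def
  by (auto intro: finite_subset[of _ "{a. f a \<noteq> 0 \<and> a \<le> _} \<union> {a. g a \<noteq> 0 \<and> a \<le> _}"])

lemma is_puiseux_sneg: "is_puiseux f \<Longrightarrow> is_puiseux (sneg f)"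
  unfolding is_puiseux_def sneg_def by auto

lemma is_puiseux_smul:
  assumes f: "is_puiseux f" and g: "is_puiseux g"
  shows "is_puiseux (smul f g)"
  unfolding is_puiseux_def
proof
  fix R
  obtain mf where mf: "\<And>a. f a \<noteq> 0 \<Longrightarrow> mf \<le> a" using is_puiseux_bounded_below[OF f] by blast
  obtain mg where mg: "\<And>a. g a \<noteq> 0 \<Longrightarrow> mg \<le> a" using is_puiseux_bounded_below[OF g] by blast
  let ?A = "{a. f a \<noteq> 0 \<and> a \<le> R - mg}" and ?B = "{b. g b \<noteq> 0 \<and> b \<le> R - mf}"
  have "{r. smul f g r \<noteq> 0 \<and> r \<le> R} \<subseteq> (\<lambda>(a, b). a + b) ` (?A \<times> ?B)"
  proof clarify
    fix r assume r: "smul f g r \<noteq> 0" "r \<le> R"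
    obtain a where a: "f a \<noteq> 0" "g (r - a) \<noteq> 0" using smul_nonzeroE[OF r(1)] .
    then have "(a, r - a) \<in> ?A \<times> ?B" using mf[of a] mg[of "r - a"] r(2) by auto
    then show "r \<in> (\<lambda>(a, b). a + b) ` (?A \<times> ?B)" by force
  qed
  then show "finite {r. smul f g r \<noteq> 0 \<and> r \<le> R}"
    by (rule finite_subset) (use f g in \<open>simp add: is_puiseux_def\<close>)
qed

typedef puis = "{f. is_puiseux f}"
  using is_puiseux_szero by blast

setup_lifting type_definition_puis

instantiation puis :: comm_ring_1
begin
lift_definition zero_puis :: puis is szero by (rule is_puiseux_szero)
lift_definition one_puis :: puis is sone by (rule is_puiseux_sone)
lift_definition plus_puis :: "puis \<Rightarrow> puis \<Rightarrow> puis" is sadd by (rule is_puiseux_sadd)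
lift_definition uminus_puis :: "puis \<Rightarrow> puis" is sneg by (rule is_puiseux_sneg)
lift_definition minus_puis :: "puis \<Rightarrow> puis \<Rightarrow> puis" is "\<lambda>f g. sadd f (sneg g)"
  by (simp add: is_puiseux_sadd is_puiseux_sneg)
lift_definition times_puis :: "puis \<Rightarrow> puis \<Rightarrow> puis" is smul by (rule is_puiseux_smul)
instance
proof
  fix a b c :: puis
  show "a * b * c = a * (b * c)" by transfer (rule smul_assoc)
  show "a * b = b * a" by transfer (rule smul_commute)
  show "1 * a = a" by transfer (rule smul_sone)
  show "(a + b) * c = a * c + b * c" by transfer (rule smul_sadd_left)
  show "a + b + c = a + (b + c)" by transfer (auto simp: sadd_def)
  show "a + b = b + a" by transfer (auto simp: sadd_def)
  show "0 + a = a" by transfer (auto simp: sadd_def szero_def)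
  show "- a + a = 0" by transfer (auto simp: sadd_def szero_def sneg_def)
  show "a - b = a + - b" by transfer simp
  show "0 \<noteq> (1::puis)" by transfer (auto simp: szero_def sone_def fun_eq_iff)
qed
end

lemma Rep_puis_zero: "Rep_puis 0 = szero" by transfer simp
lemma Rep_puis_one: "Rep_puis 1 = sone" by transfer simp
lemma Rep_puis_plus: "Rep_puis (a + b) = sadd (Rep_puis a) (Rep_puis b)" by transfer simp
lemma Rep_puis_uminus: "Rep_puis (- a) = sneg (Rep_puis a)" by transfer simp
lemma Rep_puis_times: "Rep_puis (a * b) = smul (Rep_puis a) (Rep_puis b)" by transfer simp

lemma is_puiseux_Rep_puis: "is_puiseux (Rep_puis a)"
  using Rep_puis by simp

lemma Rep_puis_sum_list:
  "Rep_puis (sum_list (map f xs)) = foldr sadd (map (\<lambda>x. Rep_puis (f x)) xs) szero"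
  by (induction xs) (auto simp: Rep_puis_zero Rep_puis_plus)

definition puis_mat :: "nat \<Rightarrow> (nat \<Rightarrow> nat \<Rightarrow> ser) \<Rightarrow> puis mat" where
  "puis_mat n M = mat n n (\<lambda>(r, c). Abs_puis (M r c))"

lemma puis_mat_carrier: "puis_mat n M \<in> carrier_mat n n"
  unfolding puis_mat_def by simp

lemma detK_eq_det:
  assumes "\<forall>r<n. \<forall>c<n. is_puiseux (M r c)"
  shows "detK n M = Rep_puis (det (puis_mat n M))"
  using assms
proof (induction n arbitrary: M)
  case 0
  have "det (puis_mat 0 M) = 1" unfolding puis_mat_def det_def by simp
  then show ?case by (simp add: Rep_puis_one)
next
  case (Suc n)
  let ?A = "puis_mat (Suc n) M" and ?minor = "\<lambda>j r c. M (Suc r) (skip j c)"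
  have "det ?A = (\<Sum>j<Suc n. ?A $$ (0, j) * cofactor ?A 0 j)"
    by (rule laplace_expansion_row[OF puis_mat_carrier]) simp
  also have "\<dots> = sum_list (map (\<lambda>j. ?A $$ (0, j) * cofactor ?A 0 j) [0..<Suc n])"
    by (simp add: sum_set_upt_conv_sum_list_nat[symmetric] atLeast0LessThan)
  finally have laplace: "det ?A = \<dots>" .
  have laplace_term: "Rep_puis (?A $$ (0, j) * cofactor ?A 0 j) =
      smul (if even j then M 0 j else sneg (M 0 j)) (detK n (?minor j))" if j: "j < Suc n" for j
  proof -
    have "mat_delete ?A 0 j = puis_mat n (?minor j)"
      by (rule eq_matI) (auto simp: mat_delete_def puis_mat_def skip_def)
    moreover have "detK n (?minor j) = Rep_puis (det (puis_mat n (?minor j)))"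
      using Suc.prems j by (intro Suc.IH) (auto simp: skip_def)
    moreover have "Rep_puis (?A $$ (0, j)) = M 0 j"
      using Suc.prems j by (simp add: puis_mat_def Abs_puis_inverse)
    ultimately show ?thesis
      by (cases "even j") (simp_all add: cofactor_def Rep_puis_times Rep_puis_uminus smul_sneg_left)
  qed
  show ?case
    unfolding laplace Rep_puis_sum_list detK.simps
    by (rule arg_cong[where f="\<lambda>xs. foldr sadd xs szero"], rule map_cong) (auto simp: laplace_term)
qed

lemma is_puiseux_detK:
  "\<forall>r<n. \<forall>c<n. is_puiseux (M r c) \<Longrightarrow> is_puiseux (detK n M)"
  by (simp add: detK_eq_det is_puiseux_Rep_puis)

lemma detK_identical_rows:
  assumes "\<forall>r<n. \<forall>c<n. is_puiseux (M r c)" "r < n" "r' < n" "r \<noteq> r'" "\<And>c. M r c = M r' c"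
  shows "detK n M = szero"
proof -
  have "row (puis_mat n M) r = row (puis_mat n M) r'"
    using assms(2,3,5) by (auto simp: puis_mat_def intro!: eq_vecI)
  then have "det (puis_mat n M) = 0"
    by (rule det_identical_rows[OF puis_mat_carrier assms(4,2,3)])
  then show ?thesis using assms(1) by (simp add: detK_eq_det Rep_puis_zero)
qed

section \<open>Initial terms\<close>

text \<open>The coefficient c may be 0, in which case f just has no terms of order at most v.\<close>

definition initial_term :: "ser \<Rightarrow> real \<Rightarrow> complex \<Rightarrow> bool" where
  "initial_term f v c \<longleftrightarrow> (\<forall>a<v. f a = 0) \<and> f v = c"

lemma initial_term_szero: "initial_term szero v 0"
  unfolding initial_term_def szero_def by simp

lemma initial_term_sone: "initial_term sone 0 1"
  unfolding initial_term_def sone_def by simp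

lemma initial_term_sadd: "initial_term f v c \<Longrightarrow> initial_term g v e \<Longrightarrow> initial_term (sadd f g) v (c + e)"
  unfolding initial_term_def sadd_def by simp

lemma initial_term_sneg: "initial_term f v c \<Longrightarrow> initial_term (sneg f) v (- c)"
  unfolding initial_term_def sneg_def by simp

lemma initial_term_lower:
  "initial_term f w c \<Longrightarrow> v \<le> w \<Longrightarrow> initial_term f v (if v = w then c else 0)"
  unfolding initial_term_def by auto

lemma initial_term_smul:
  assumes f: "initial_term f v c" and g: "initial_term g w e"
  shows "initial_term (smul f g) (v + w) (c * e)"
proof -
  have f_ge: "v \<le> a" if "f a \<noteq> 0" for a using f that unfolding initial_term_def by (meson not_le)
  have g_ge: "w \<le> b" if "g b \<noteq> 0" for b using g that unfolding initial_term_def by (meson not_le)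
  have "smul f g r = 0" if "r < v + w" for r
  proof -
    have "{a. f a \<noteq> 0 \<and> g (r - a) \<noteq> 0} = {}" using f_ge g_ge that by force
    then show ?thesis unfolding smul_def by (metis sum.empty)
  qed
  moreover have "smul f g (v + w) = (\<Sum>a\<in>{v}. f a * g (v + w - a))"
    by (rule smul_eq_sum) (use f_ge g_ge in force)+
  ultimately show ?thesis using f g unfolding initial_term_def by simp
qed

lemma initial_term_sum:
  assumes "finite S" "\<And>s. s \<in> S \<Longrightarrow> initial_term (Rep_puis (F s)) (V s) (K s) \<and> v \<le> V s"
  shows "initial_term (Rep_puis (\<Sum>s\<in>S. F s)) v (\<Sum>s | s \<in> S \<and> V s = v. K s)"
  using assms
proof (induction S rule: finite_induct)
  case empty
  then show ?case by (simp add: Rep_puis_zero initial_term_szero)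
next
  case (insert x S)
  have "initial_term (Rep_puis (F x + sum F S)) v
      ((if v = V x then K x else 0) + (\<Sum>s | s \<in> S \<and> V s = v. K s))"
    unfolding Rep_puis_plus using insert by (intro initial_term_sadd initial_term_lower) auto
  moreover have "{s. s \<in> insert x S \<and> V s = v} =
      (if V x = v then insert x {s. s \<in> S \<and> V s = v} else {s. s \<in> S \<and> V s = v})"
    by auto
  ultimately show ?case using insert by auto
qed

lemma initial_term_prod:
  assumes "finite I" "\<And>i. i \<in> I \<Longrightarrow> initial_term (Rep_puis (F i)) (V i) (K i)"
  shows "initial_term (Rep_puis (\<Prod>i\<in>I. F i)) (\<Sum>i\<in>I. V i) (\<Prod>i\<in>I. K i)"
  using assms
  by (induction I rule: finite_induct) (simp_all add: Rep_puis_one Rep_puis_times initial_term_sone initial_term_smul)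

lemma initial_term_signof: "initial_term (Rep_puis (signof p)) 0 (of_int (sign p))"
  using initial_term_sone initial_term_sneg[OF initial_term_sone]
  by (simp add: sign_def Rep_puis_one Rep_puis_uminus)

lemma initial_term_det:
  assumes A: "A \<in> carrier_mat n n"
    and entries: "\<forall>r<n. \<forall>c<n. initial_term (Rep_puis (A $$ (r, c))) (V r c) (K r c)"
    and bound: "\<And>\<sigma>. \<sigma> permutes {0..<n} \<Longrightarrow> v \<le> (\<Sum>i=0..<n. V i (\<sigma> i))"
  shows "initial_term (Rep_puis (det A)) v
           (\<Sum>\<sigma> | \<sigma> permutes {0..<n} \<and> (\<Sum>i=0..<n. V i (\<sigma> i)) = v. of_int (sign \<sigma>) * (\<Prod>i=0..<n. K i (\<sigma> i)))"
proof -
  have summand: "initial_term (Rep_puis (signof \<sigma> * (\<Prod>i=0..<n. A $$ (i, \<sigma> i))))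
      (\<Sum>i=0..<n. V i (\<sigma> i)) (of_int (sign \<sigma>) * (\<Prod>i=0..<n. K i (\<sigma> i)))"
    if \<sigma>: "\<sigma> permutes {0..<n}" for \<sigma>
  proof -
    have "initial_term (Rep_puis (\<Prod>i=0..<n. A $$ (i, \<sigma> i))) (\<Sum>i=0..<n. V i (\<sigma> i)) (\<Prod>i=0..<n. K i (\<sigma> i))"
      by (rule initial_term_prod) (use entries permutes_in_image[OF \<sigma>] in auto)
    from initial_term_smul[OF initial_term_signof this] show ?thesis
      by (simp add: Rep_puis_times)
  qed
  have "initial_term (Rep_puis (\<Sum>\<sigma>\<in>{\<sigma>. \<sigma> permutes {0..<n}}. signof \<sigma> * (\<Prod>i=0..<n. A $$ (i, \<sigma> i)))) v
      (\<Sum>\<sigma> | \<sigma> \<in> {\<sigma>. \<sigma> permutes {0..<n}} \<and> (\<Sum>i=0..<n. V i (\<sigma> i)) = v.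
         of_int (sign \<sigma>) * (\<Prod>i=0..<n. K i (\<sigma> i)))"
    by (rule initial_term_sum) (use summand bound finite_permutations in auto)
  then show ?thesis unfolding det_def'[OF A] by simp
qed

lemma initial_term_nonzero:
  assumes "initial_term f v c" "c \<noteq> 0"
  shows "f \<noteq> szero" "ord_ser f = v" "trop f = - v" "Pc f = c"
proof -
  show o: "ord_ser f = v"
    unfolding ord_ser_def
    by (rule Least_equality) (use assms in \<open>auto simp: initial_term_def not_le[symmetric]\<close>)
  show "trop f = - v" by (simp add: trop_def o)
  show "Pc f = c" using assms by (simp add: Pc_def o initial_term_def)
  show "f \<noteq> szero" using assms by (auto simp: initial_term_def szero_def)
qed

lemma initial_term_ord_ser:
  assumes "is_puiseux f" "f \<noteq> szero"
  shows "initial_term f (ord_ser f) (Pc f)" "Pc f \<noteq> 0"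
proof -
  obtain a0 where "f a0 \<noteq> 0" using assms(2) by (auto simp: szero_def)
  then obtain m where m: "f m \<noteq> 0" "\<And>a. f a \<noteq> 0 \<Longrightarrow> m \<le> a"
    using is_puiseux_support_has_min[OF assms(1)] by blast
  have o: "ord_ser f = m"
    unfolding ord_ser_def by (rule Least_equality) (use m in auto)
  show "initial_term f (ord_ser f) (Pc f)" "Pc f \<noteq> 0"
    unfolding initial_term_def o Pc_def using m by force+
qed

lemma skip_le: "c < d \<Longrightarrow> j \<le> d \<Longrightarrow> skip j c \<le> d"
  unfolding skip_def by auto

lemma skip_inj: "skip j a = skip j b \<Longrightarrow> a = b"
  unfolding skip_def by (auto split: if_splits)

lemma skip_neq: "skip j c \<noteq> j"
  unfolding skip_def by auto

lemma skip_perm_le: "\<sigma> permutes {0..<d} \<Longrightarrow> j \<le> d \<Longrightarrow> r < d \<Longrightarrow> skip j (\<sigma> r) \<le> d"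
  using permutes_in_image[of \<sigma> "{0..<d}" r] skip_le by simp

definition opt_perms :: "nat \<Rightarrow> (nat \<Rightarrow> nat \<Rightarrow> real) \<Rightarrow> (nat \<Rightarrow> nat) set" where
  "opt_perms n M = {\<sigma>. \<sigma> permutes {0..<n} \<and> (\<Sum>i=0..<n. M i (\<sigma> i)) = tdet n M}"

lemma sum_perm_le_tdet: "\<sigma> permutes {0..<n} \<Longrightarrow> (\<Sum>i=0..<n. M i (\<sigma> i)) \<le> tdet n M"
  unfolding tdet_def
  by (rule Max_ge) (auto simp: finite_permutations lessThan_atLeast0 intro!: exI[of _ \<sigma>])

lemma opt_perms_nonempty: "opt_perms n M \<noteq> {}"
proof -
  let ?S = "{(\<Sum>i<n. M i (\<sigma> i)) | \<sigma>. \<sigma> permutes {..<n}}"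
  have "finite ?S" using finite_permutations[of "{..<n}"] by (simp add: setcompr_eq_image)
  moreover have "?S \<noteq> {}" using permutes_id[of "{..<n}"] by blast
  ultimately have "tdet n M \<in> ?S" unfolding tdet_def by (rule Max_in)
  then show ?thesis unfolding opt_perms_def by (auto simp: lessThan_atLeast0)
qed

lemma finite_opt_perms: "finite (opt_perms n M)"
  unfolding opt_perms_def by (rule finite_subset[OF _ finite_permutations[of "{0..<n}"]]) auto

lemma opt_perms_permutes: "\<sigma> \<in> opt_perms n M \<Longrightarrow> \<sigma> permutes {0..<n}"
  unfolding opt_perms_def by simp

text \<open>The part of the classical Cramer's rule that survives in the initial terms: only the
  permutations attaining the tropical determinants of the tropical rows contribute.\<close>

definition cramer_initial :: "nat \<Rightarrow> (nat \<Rightarrow> real) list \<Rightarrow> (nat \<Rightarrow> 'a::comm_ring_1) list \<Rightarrow> nat \<Rightarrow> 'a" where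
  "cramer_initial d ts vs i = (if i \<le> d then
     (if even i then 1 else -1) *
     (\<Sum>\<sigma>\<in>opt_perms d (\<lambda>r c. (ts ! r) (skip i c)).
        of_int (sign \<sigma>) * (\<Prod>r=0..<d. (vs ! r) (skip i (\<sigma> r))))
   else 0)"

lemma detK_initial_term:
  assumes "\<forall>r<n. \<forall>c<n. is_puiseux (M r c) \<and> initial_term (M r c) (- T r c - H r) (L r * G r c)"
  shows "initial_term (detK n M) (- tdet n T - (\<Sum>r=0..<n. H r))
           ((\<Prod>r=0..<n. L r) * (\<Sum>\<sigma>\<in>opt_perms n T. of_int (sign \<sigma>) * (\<Prod>r=0..<n. G r (\<sigma> r))))"
proof -
  have sum_V: "(\<Sum>i=0..<n. - T i (\<sigma> i) - H i) = - (\<Sum>i=0..<n. T i (\<sigma> i)) - (\<Sum>r=0..<n. H r)" for \<sigma>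
    by (simp add: sum_subtractf sum_negf)
  have "initial_term (Rep_puis (det (puis_mat n M))) (- tdet n T - (\<Sum>r=0..<n. H r))
      (\<Sum>\<sigma> | \<sigma> permutes {0..<n} \<and> (\<Sum>i=0..<n. - T i (\<sigma> i) - H i) = - tdet n T - (\<Sum>r=0..<n. H r).
          of_int (sign \<sigma>) * (\<Prod>i=0..<n. L i * G i (\<sigma> i)))"
    by (rule initial_term_det[OF puis_mat_carrier])
       (use assms sum_perm_le_tdet[of _ n T] in \<open>auto simp: puis_mat_def Abs_puis_inverse sum_V\<close>)
  moreover have "{\<sigma>. \<sigma> permutes {0..<n} \<and> (\<Sum>i=0..<n. - T i (\<sigma> i) - H i) = - tdet n T - (\<Sum>r=0..<n. H r)} =
      opt_perms n T"
    unfolding opt_perms_def sum_V by auto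
  ultimately show ?thesis
    using assms by (simp add: detK_eq_det prod.distrib sum_distrib_left mult.left_commute)
qed

lemma is_puiseux_cramerK:
  assumes "\<forall>r<d. \<forall>c\<le>d. is_puiseux ((vs ! r) c)"
  shows "is_puiseux (cramerK d vs j)"
  using assms is_puiseux_detK[of d "\<lambda>r c. (vs ! r) (skip j c)"]
  by (auto simp: cramerK_def skip_def is_puiseux_szero is_puiseux_sneg)

lemma cramerK_initial_term:
  assumes "\<forall>r<d. \<forall>c\<le>d. is_puiseux ((vs ! r) c) \<and>
             initial_term ((vs ! r) c) (- (ts ! r) c - H r) (L r * (cs ! r) c)"
    and j: "j \<le> d"
  shows "initial_term (cramerK d vs j) (- cramerT d ts j - (\<Sum>r=0..<d. H r))
           ((\<Prod>r=0..<d. L r) * cramer_initial d ts cs j)"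
proof -
  let ?Ms = "\<lambda>r c. (vs ! r) (skip j c)" and ?Ts = "\<lambda>r c. (ts ! r) (skip j c)"
    and ?Cs = "\<lambda>r c. (cs ! r) (skip j c)"
  have "initial_term (detK d ?Ms) (- tdet d ?Ts - (\<Sum>r=0..<d. H r))
      ((\<Prod>r=0..<d. L r) * (\<Sum>\<sigma>\<in>opt_perms d ?Ts. of_int (sign \<sigma>) * (\<Prod>r=0..<d. ?Cs r (\<sigma> r))))"
    by (rule detK_initial_term[where T = ?Ts and G = ?Cs]) (use assms skip_le j in auto)
  then show ?thesis
    using j initial_term_sneg by (cases "even j") (auto simp: cramerK_def cramerT_def cramer_initial_def)
qed

lemma foldl_snoc_nth:
  fixes F :: "nat list \<Rightarrow> 'a list \<Rightarrow> 'a" and init :: "'a list"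
  defines "R \<equiv> foldl (\<lambda>acc args. acc @ [F args (map ((!) acc) args)]) init"
  shows "length (R C) = length init + length C \<and>
         (\<forall>e<length init. R C ! e = init ! e) \<and>
         (\<forall>j<length C. (\<forall>a\<in>set (C ! j). a < length init + j) \<longrightarrow>
            R C ! (length init + j) = F (C ! j) (map ((!) (R C)) (C ! j)))"
proof (induction C rule: rev_induct)
  case Nil
  then show ?case unfolding R_def by simp
next
  case (snoc c C)
  have R: "R (C @ [c]) = R C @ [F c (map ((!) (R C)) c)]" unfolding R_def by simp
  have map_snoc: "map ((!) (R C @ [y])) as = map ((!) (R C)) as"
    if "\<forall>a\<in>set as. a < length (R C)" for as y
    using that by (simp add: nth_append)
  have step: "R (C @ [c]) ! (length init + j) = F ((C @ [c]) ! j) (map ((!) (R (C @ [c]))) ((C @ [c]) ! j))"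
    if j: "j < length (C @ [c])" and args: "\<forall>a\<in>set ((C @ [c]) ! j). a < length init + j" for j
  proof (cases "j < length C")
    case True
    then have "\<forall>a\<in>set (C ! j). a < length (R C)" using args snoc.IH by (auto simp: nth_append)
    then show ?thesis using True args snoc.IH by (simp add: R map_snoc nth_append)
  next
    case False
    then have "j = length C" using j by simp
    then show ?thesis using args snoc.IH by (simp add: R map_snoc nth_append)
  qed
  show ?case
  proof (intro conjI allI impI)
    show "length (R (C @ [c])) = length init + length (C @ [c])" using snoc.IH by (simp add: R)
    show "R (C @ [c]) ! e = init ! e" if "e < length init" for e
      using snoc.IH that by (simp add: R nth_append)
  qed (fact step)
qed

lemma foldl_snoc_nth_input:
  "e < length init \<Longrightarrow> foldl (\<lambda>acc args. acc @ [F args (map ((!) acc) args)]) init C ! e = init ! e"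
  using foldl_snoc_nth by blast

lemma foldl_snoc_nth_step:
  fixes F :: "nat list \<Rightarrow> 'a list \<Rightarrow> 'a" and init :: "'a list"
  defines "R \<equiv> foldl (\<lambda>acc args. acc @ [F args (map ((!) acc) args)]) init"
  assumes "j < length C" "\<forall>a\<in>set (C ! j). a < length init + j"
  shows "R C ! (length init + j) = F (C ! j) (map ((!) (R C)) (C ! j))"
  using foldl_snoc_nth[of F init C] assms unfolding R_def by blast

lemma wf_construction_length_args:
  "wf_construction d N C kind \<Longrightarrow> k < length C \<Longrightarrow> length (C ! k) = d"
  unfolding wf_construction_def by blast

lemma wf_construction_args_less:
  "wf_construction d N C kind \<Longrightarrow> k < length C \<Longrightarrow> a \<in> set (C ! k) \<Longrightarrow> a < N + k"
  unfolding wf_construction_def by blast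

lemma construction_induct [consumes 2, case_names input step]:
  assumes wf: "wf_construction d N C kind" and e: "e < N + length C"
    and input: "\<And>i. i < N \<Longrightarrow> Q i"
    and step: "\<And>k. k < length C \<Longrightarrow> (\<And>a. a \<in> set (C ! k) \<Longrightarrow> Q a) \<Longrightarrow> Q (N + k)"
  shows "Q e"
  using e
proof (induction e rule: less_induct)
  case (less e)
  show ?case
  proof (cases "e < N")
    case True
    then show ?thesis by (rule input)
  next
    case False
    then obtain k where k: "e = N + k" "k < length C"
      using less.prems by (metis add_diff_inverse_nat add_less_cancel_left)
    show ?thesis
      unfolding k(1) by (rule step[OF k(2)]) (use less wf_construction_args_less[OF wf k(2)] k in auto)
  qed
qed

lemma evalK_nth_input: "i < N \<Longrightarrow> evalK d N C P ! i = P i"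
  using foldl_snoc_nth_input[of i "map P [0..<N]" "\<lambda>_. cramerK d" C] unfolding evalK_def by simp

lemma evalK_nth_step:
  assumes "wf_construction d N C kind" "k < length C"
  shows "evalK d N C P ! (N + k) = cramerK d (map ((!) (evalK d N C P)) (C ! k))"
  using foldl_snoc_nth_step[of k C "map P [0..<N]" "\<lambda>_. cramerK d"] assms(2) wf_construction_args_less[OF assms]
  unfolding evalK_def by simp

lemma evalT_nth_input: "i < N \<Longrightarrow> evalT d N C p ! i = p i"
  using foldl_snoc_nth_input[of i "map p [0..<N]" "\<lambda>_. cramerT d" C] unfolding evalT_def by simp

lemma evalT_nth_step:
  assumes "wf_construction d N C kind" "k < length C"
  shows "evalT d N C p ! (N + k) = cramerT d (map ((!) (evalT d N C p)) (C ! k))"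
  using foldl_snoc_nth_step[of k C "map p [0..<N]" "\<lambda>_. cramerT d"] assms(2) wf_construction_args_less[OF assms]
  unfolding evalT_def by simp

definition eval_initial ::
  "nat \<Rightarrow> nat \<Rightarrow> nat list list \<Rightarrow> (nat \<Rightarrow> nat \<Rightarrow> real) \<Rightarrow> (nat \<Rightarrow> nat \<Rightarrow> 'a::comm_ring_1) \<Rightarrow> (nat \<Rightarrow> 'a) list"
where
  "eval_initial d N C p X =
     foldl (\<lambda>acc args. acc @ [cramer_initial d (map ((!) (evalT d N C p)) args) (map ((!) acc) args)])
       (map X [0..<N]) C"

lemma eval_initial_nth_input: "i < N \<Longrightarrow> eval_initial d N C p X ! i = X i"
  using foldl_snoc_nth_input[of i "map X [0..<N]" "\<lambda>args. cramer_initial d (map ((!) (evalT d N C p)) args)" C]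
  unfolding eval_initial_def by simp

lemma eval_initial_nth_step:
  assumes "wf_construction d N C kind" "k < length C"
  shows "eval_initial d N C p X ! (N + k) =
    cramer_initial d (map ((!) (evalT d N C p)) (C ! k)) (map ((!) (eval_initial d N C p X)) (C ! k))"
  using foldl_snoc_nth_step[of k C "map X [0..<N]" "\<lambda>args. cramer_initial d (map ((!) (evalT d N C p)) args)"]
    assms(2) wf_construction_args_less[OF assms]
  unfolding eval_initial_def by simp

lemma evalK_is_puiseux:
  assumes wf: "wf_construction d N C kind" and P: "\<forall>i<N. proj_pointK d (P i)"
    and e: "e < N + length C" and j: "j \<le> d"
  shows "is_puiseux ((evalK d N C P ! e) j)"
  using wf e j
proof (induction e arbitrary: j rule: construction_induct)
  case (input i)
  then show ?case using P by (simp add: evalK_nth_input proj_pointK_def)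
next
  case (step k)
  then show ?case
    using wf_construction_length_args[OF wf step.hyps]
    by (auto simp: evalK_nth_step[OF wf step.hyps] intro!: is_puiseux_cramerK)
qed

lemma is_lift_initial_term:
  assumes lift: "is_lift d N P p" and pc: "has_Pc d N P x" and i: "i < N"
  shows "\<exists>h lam. lam \<noteq> 0 \<and> (\<forall>j\<le>d. initial_term (P i j) (- p i j - h) (lam * torus_hom (x i) j))"
proof -
  obtain h where h: "\<forall>j\<le>d. trop (P i j) = p i j + h"
    using lift i unfolding is_lift_def trop_proj_eq_def by blast
  obtain lam where lam: "lam \<noteq> 0" "\<forall>j\<le>d. Pc (P i j) = lam * torus_hom (x i) j"
    using pc i unfolding has_Pc_def cproj_eq_def by blast
  have "initial_term (P i j) (- p i j - h) (lam * torus_hom (x i) j)" if j: "j \<le> d" for j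
  proof -
    have "is_puiseux (P i j)" "P i j \<noteq> szero"
      using lift i j unfolding is_lift_def proj_pointK_def by auto
    moreover have "ord_ser (P i j) = - p i j - h" using h j unfolding trop_def by force
    ultimately show ?thesis using initial_term_ord_ser(1) lam(2) j by metis
  qed
  then show ?thesis using lam(1) by blast
qed

lemma evalK_initial_term:
  assumes wf: "wf_construction d N C kind" and lift: "is_lift d N P p" and pc: "has_Pc d N P x"
    and e: "e < N + length C"
  shows "\<exists>h lam. lam \<noteq> 0 \<and> (\<forall>j\<le>d. initial_term ((evalK d N C P ! e) j)
           (- (evalT d N C p ! e) j - h) (lam * (eval_initial d N C p (\<lambda>i. torus_hom (x i)) ! e) j))"
  using wf e
proof (induction e rule: construction_induct)
  case (input i)
  then show ?case
    using is_lift_initial_term[OF lift pc input]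
    by (simp add: evalK_nth_input evalT_nth_input eval_initial_nth_input)
next
  case (step k)
  let ?K = "evalK d N C P" and ?T = "evalT d N C p" and ?G = "eval_initial d N C p (\<lambda>i. torus_hom (x i))"
  let ?args = "C ! k"
  have len: "length ?args = d" by (rule wf_construction_length_args[OF wf step.hyps])
  obtain H L where HL: "\<forall>a\<in>set ?args. L a \<noteq> 0 \<and>
      (\<forall>j\<le>d. initial_term ((?K ! a) j) (- (?T ! a) j - H a) (L a * (?G ! a) j))"
    using step.IH by metis
  have puiseux: "is_puiseux ((?K ! a) c)" if "a \<in> set ?args" "c \<le> d" for a c
    using evalK_is_puiseux[OF wf _ _ that(2)] lift wf_construction_args_less[OF wf step.hyps that(1)] step.hyps
    unfolding is_lift_def by auto
  show ?case
  proof (intro exI conjI allI impI)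
    show "(\<Prod>r=0..<d. L (?args ! r)) \<noteq> 0" using HL len by simp
    fix j assume j: "j \<le> d"
    have "initial_term (cramerK d (map ((!) ?K) ?args) j)
        (- cramerT d (map ((!) ?T) ?args) j - (\<Sum>r=0..<d. H (?args ! r)))
        ((\<Prod>r=0..<d. L (?args ! r)) * cramer_initial d (map ((!) ?T) ?args) (map ((!) ?G) ?args) j)"
      by (rule cramerK_initial_term[OF _ j]) (use HL len puiseux in auto)
    then show "initial_term ((?K ! (N + k)) j) (- (?T ! (N + k)) j - (\<Sum>r=0..<d. H (?args ! r)))
        ((\<Prod>r=0..<d. L (?args ! r)) * (?G ! (N + k)) j)"
      by (simp add: evalK_nth_step[OF wf step.hyps] evalT_nth_step[OF wf step.hyps]
          eval_initial_nth_step[OF wf step.hyps])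
  qed
qed

lemma evalK_tropicalizes:
  assumes wf: "wf_construction d N C kind" and lift: "is_lift d N P p" and pc: "has_Pc d N P x"
    and e: "e < N + length C"
    and initial_nonzero: "\<forall>j\<le>d. (eval_initial d N C p (\<lambda>i. torus_hom (x i)) ! e) j \<noteq> 0"
  shows "(\<forall>j\<le>d. (evalK d N C P ! e) j \<noteq> szero) \<and>
         trop_proj_eq d (\<lambda>j. trop ((evalK d N C P ! e) j)) (evalT d N C p ! e)"
proof -
  obtain h lam where lam: "lam \<noteq> 0" and init: "\<forall>j\<le>d. initial_term ((evalK d N C P ! e) j)
      (- (evalT d N C p ! e) j - h) (lam * (eval_initial d N C p (\<lambda>i. torus_hom (x i)) ! e) j)"
    using evalK_initial_term[OF wf lift pc e] by blast
  have "(evalK d N C P ! e) j \<noteq> szero \<and> trop ((evalK d N C P ! e) j) = (evalT d N C p ! e) j + h"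
    if "j \<le> d" for j
    using initial_term_nonzero(1,3)[OF init[rule_format, OF that]] lam initial_nonzero that by simp
  then show ?thesis unfolding trop_proj_eq_def by blast
qed

lemma torus_hom_nonzero: "x \<in> torus_tuples d N \<Longrightarrow> i < N \<Longrightarrow> j \<le> d \<Longrightarrow> torus_hom (x i) j \<noteq> 0"
  unfolding torus_tuples_def torus_hom_def by auto

lemma exists_lift_with_Pc:
  assumes x: "x \<in> torus_tuples d N"
  shows "\<exists>P. is_lift d N P p \<and> has_Pc d N P x"
proof (intro exI conjI)
  define P where "P i j a = (if a = - p i j then torus_hom (x i) j else 0)" for i j a
  have init: "initial_term (P i j) (- p i j) (torus_hom (x i) j)" for i j
    unfolding initial_term_def P_def by simp
  have puiseux: "is_puiseux (P i j)" for i j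
    unfolding is_puiseux_def P_def by (auto intro: finite_subset[of _ "{- p i j}"])
  note nonzero = initial_term_nonzero[OF init torus_hom_nonzero[OF x]]
  show "is_lift d N P p"
    unfolding is_lift_def proj_pointK_def trop_proj_eq_def
    using puiseux nonzero(1,3) by (metis add.right_neutral minus_minus order_refl)
  show "has_Pc d N P x"
    unfolding has_Pc_def cproj_eq_def
    using nonzero(4) by (metis mult_1 one_neq_zero)
qed

lemma meaningful_args_distinct:
  assumes wf: "wf_construction d N C kind" and P: "\<forall>i<N. proj_pointK d (P i)"
    and meaningful: "meaningful d N C P"
    and k: "k < length C" and r: "r < d" "r' < d" "r \<noteq> r'"
  shows "C ! k ! r \<noteq> C ! k ! r'"
proof
  assume same: "C ! k ! r = C ! k ! r'"
  have len: "length (C ! k) = d" by (rule wf_construction_length_args[OF wf k])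
  have "(evalK d N C P ! (N + k)) j = szero" if j: "j \<le> d" for j
  proof -
    let ?M = "\<lambda>r c. (map ((!) (evalK d N C P)) (C ! k) ! r) (skip j c)"
    have "\<forall>s<d. \<forall>c<d. is_puiseux (?M s c)"
    proof (intro allI impI)
      fix s c assume s: "s < d" and c: "c < d"
      have "C ! k ! s < N + length C"
        using wf_construction_args_less[OF wf k, of "C ! k ! s"] len k s by simp
      then show "is_puiseux (?M s c)"
        using evalK_is_puiseux[OF wf P _ skip_le[OF c j]] len s by simp
    qed
    then have "detK d ?M = szero"
      by (rule detK_identical_rows[OF _ r]) (simp add: len r same)
    then show ?thesis
      using j by (simp add: evalK_nth_step[OF wf k] cramerK_def sneg_def szero_def)
  qed
  then show False using meaningful k unfolding meaningful_def by blast
qed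

section \<open>Construction graphs that are trees\<close>

lemma successively_distinct_subpath:
  assumes "successively R xs" "xs \<noteq> []"
  shows "\<exists>ys. ys \<noteq> [] \<and> hd ys = hd xs \<and> last ys = last xs \<and> distinct ys \<and>
           successively R ys \<and> set ys \<subseteq> set xs"
  using assms
proof (induction "length xs" arbitrary: xs rule: less_induct)
  case less
  show ?case
  proof (cases "distinct xs")
    case True
    then show ?thesis using less.prems by blast
  next
    case False
    then obtain as y bs cs where xs: "xs = as @ [y] @ bs @ [y] @ cs"
      using not_distinct_decomp by blast
    let ?zs = "as @ [y] @ cs"
    have "successively R ((as @ [y]) @ (bs @ (y # cs)))" using less.prems(1) xs by simp
    then have "successively R (as @ [y])" "successively R (y # cs)"
      using successively_append_iff[of R bs "y # cs"] by (auto simp only: successively_append_iff)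
    then have zs: "successively R ?zs"
      using successively_append_iff[of R as "[y]"] successively_append_iff[of R as "y # cs"] by simp
    have ends: "hd ?zs = hd xs" "last ?zs = last xs" "set ?zs \<subseteq> set xs"
      unfolding xs by (cases as; cases cs; auto)+
    have "length ?zs < length xs" unfolding xs by simp
    from less.hyps[OF this zs] obtain ys where "ys \<noteq> []" "hd ys = hd ?zs" "last ys = last ?zs"
        "distinct ys" "successively R ys" "set ys \<subseteq> set ?zs"
      by blast
    then show ?thesis using ends by (intro exI[of _ ys]) auto
  qed
qed

lemma successively_distinct_neq:
  "distinct xs \<Longrightarrow> successively R xs \<Longrightarrow> successively (\<lambda>x y. R x y \<and> x \<noteq> y) xs"
  by (induction xs rule: induct_list012) auto

lemma rtrancl_successively:
  assumes "(u, v) \<in> r\<^sup>*"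
  shows "\<exists>xs. xs \<noteq> [] \<and> hd xs = u \<and> last xs = v \<and> successively (\<lambda>x y. (x, y) \<in> r) xs \<and>
           (\<forall>x\<in>set xs. (u, x) \<in> r\<^sup>*)"
  using assms
proof (induction rule: converse_rtrancl_induct)
  case base
  show ?case by (intro exI[of _ "[v]"]) simp
next
  case (step u u')
  then obtain xs where xs: "xs \<noteq> []" "hd xs = u'" "last xs = v" "successively (\<lambda>x y. (x, y) \<in> r) xs"
      "\<forall>x\<in>set xs. (u', x) \<in> r\<^sup>*"
    by blast
  show ?case
    by (intro exI[of _ "u # xs"]) (use xs step.hyps(1) in \<open>auto simp: successively_Cons intro: converse_rtrancl_into_rtrancl\<close>)
qed

lemma common_descendant_path:
  assumes "(u, z) \<in> r\<^sup>*" "(w, z) \<in> r\<^sup>*"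
  shows "\<exists>ps. ps \<noteq> [] \<and> hd ps = u \<and> last ps = w \<and> distinct ps \<and>
           successively (\<lambda>x y. ((x, y) \<in> r \<or> (y, x) \<in> r) \<and> x \<noteq> y) ps \<and>
           (\<forall>x\<in>set ps. (u, x) \<in> r\<^sup>* \<or> (w, x) \<in> r\<^sup>*)"
proof -
  let ?R = "\<lambda>x y. (x, y) \<in> r \<or> (y, x) \<in> r \<or> x = y"
  obtain xs where xs: "xs \<noteq> []" "hd xs = u" "last xs = z" "successively (\<lambda>x y. (x, y) \<in> r) xs"
      "\<forall>x\<in>set xs. (u, x) \<in> r\<^sup>*"
    using rtrancl_successively[OF assms(1)] by blast
  obtain ys where ys: "ys \<noteq> []" "hd ys = w" "last ys = z" "successively (\<lambda>x y. (x, y) \<in> r) ys"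
      "\<forall>x\<in>set ys. (w, x) \<in> r\<^sup>*"
    using rtrancl_successively[OF assms(2)] by blast
  have "successively ?R xs" using xs(4) by (rule successively_mono) simp
  moreover have "successively ?R (rev ys)"
    unfolding successively_rev using ys(4) by (rule successively_mono) simp
  ultimately have "successively ?R (xs @ rev ys)"
    using xs(1,3) ys(1,3) by (simp add: successively_append_iff hd_rev)
  then obtain ps where ps: "ps \<noteq> []" "hd ps = u" "last ps = w" "distinct ps" "successively ?R ps"
      "set ps \<subseteq> set xs \<union> set ys"
    using successively_distinct_subpath[of ?R "xs @ rev ys"] xs(1,2) ys(1,2) by (auto simp: last_rev)
  have "successively (\<lambda>x y. ((x, y) \<in> r \<or> (y, x) \<in> r) \<and> x \<noteq> y) ps"
    using successively_distinct_neq[OF ps(4,5)] by (rule successively_mono) auto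
  then show ?thesis using ps xs(5) ys(5) by blast
qed

lemma successively_cyclic:
  assumes "successively R xs" "xs \<noteq> []" "R (last xs) (hd xs)"
  shows "\<forall>i<length xs. R (xs ! i) (xs ! ((i + 1) mod length xs))"
proof (intro allI impI)
  fix i assume i: "i < length xs"
  show "R (xs ! i) (xs ! ((i + 1) mod length xs))"
  proof (cases "i + 1 < length xs")
    case True
    then show ?thesis using assms(1) by (simp add: successively_conv_nth)
  next
    case False
    then have "i = length xs - 1" "i + 1 = length xs" using i by auto
    then show ?thesis using assms(2,3) by (simp add: last_conv_nth hd_conv_nth)
  qed
qed

lemma direct_rel_less:
  assumes "wf_construction d N C kind" "(a, b) \<in> direct_rel N C"
  shows "b < a"
proof -
  have "a - N < length C" "b \<in> set (C ! (a - N))" "N \<le> a" using assms(2) unfolding direct_rel_def by auto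
  then show ?thesis using wf_construction_args_less[OF assms(1)] by fastforce
qed

lemma cg_vertices_le:
  assumes "wf_construction d N C kind" "b \<in> cg_vertices N C a"
  shows "b \<le> a"
  using assms(2) unfolding cg_vertices_def mem_Collect_eq
  by (induction rule: rtrancl_induct) (auto dest: direct_rel_less[OF assms(1)])

lemma cg_edges_intro: "a \<in> cg_vertices N C k \<Longrightarrow> (a, b) \<in> direct_rel N C \<Longrightarrow> {a, b} \<in> cg_edges N C k"
  unfolding cg_edges_def by blast

lemma cg_vertices_arg_subset:
  assumes "k < length C" "a \<in> set (C ! k)"
  shows "cg_vertices N C a \<subseteq> cg_vertices N C (N + k)"
proof
  fix v assume "v \<in> cg_vertices N C a"
  moreover have "(N + k, a) \<in> direct_rel N C" using assms unfolding direct_rel_def by simp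
  ultimately show "v \<in> cg_vertices N C (N + k)"
    unfolding cg_vertices_def by (simp add: converse_rtrancl_into_rtrancl)
qed

lemma is_tree_no_cycle:
  assumes tree: "is_tree V E" and K: "K \<in> V" "K \<notin> set ps"
    and ps: "ps \<noteq> []" "distinct ps" "set ps \<subseteq> V" "hd ps \<noteq> last ps"
      "successively (\<lambda>x y. {x, y} \<in> E) ps"
    and ends: "{K, hd ps} \<in> E" "{last ps, K} \<in> E"
  shows False
proof -
  have "successively (\<lambda>x y. {x, y} \<in> E) (K # ps)"
    using ps(1,5) ends(1) by (simp add: successively_Cons)
  moreover have "{last (K # ps), hd (K # ps)} \<in> E" using ps(1) ends(2) by simp
  ultimately have cycle: "\<forall>i<length (K # ps). {(K # ps) ! i, (K # ps) ! ((i + 1) mod length (K # ps))} \<in> E"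
    using successively_cyclic[of "\<lambda>x y. {x, y} \<in> E" "K # ps"] by blast
  have "length ps \<noteq> 1" using ps(1,4) by (cases ps) auto
  then have long: "3 \<le> length (K # ps)" using ps(1) by (cases ps) (auto simp: Suc_le_eq)
  have simple: "distinct (K # ps)" and in_V: "set (K # ps) \<subseteq> V" using ps(2,3) K by auto
  have no_cycle: "\<not> (\<exists>vs. 3 \<le> length vs \<and> distinct vs \<and> set vs \<subseteq> V \<and>
      (\<forall>i<length vs. {vs ! i, vs ! ((i + 1) mod length vs)} \<in> E))"
    using tree unfolding is_tree_def by (rule conjunct2)
  show False
    by (rule notE[OF no_cycle], intro exI[of _ "K # ps"] conjI) (rule long simple in_V cycle)+
qed

text \<open>A common descendant of two arguments would close a cycle through the step.\<close>

lemma cg_vertices_args_disjoint: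
  assumes wf: "wf_construction d N C kind" and k: "k < length C"
    and tree: "trop_admissible N C (N + k)"
    and args: "u \<in> set (C ! k)" "w \<in> set (C ! k)" "u \<noteq> w"
  shows "cg_vertices N C u \<inter> cg_vertices N C w = {}"
proof (rule ccontr)
  let ?r = "direct_rel N C" and ?K = "N + k"
  let ?V = "cg_vertices N C ?K" and ?E = "cg_edges N C ?K"
  assume "cg_vertices N C u \<inter> cg_vertices N C w \<noteq> {}"
  then obtain z where uz: "(u, z) \<in> ?r\<^sup>*" and wz: "(w, z) \<in> ?r\<^sup>*"
    unfolding cg_vertices_def by auto
  obtain ps where ps: "ps \<noteq> []" "hd ps = u" "last ps = w" "distinct ps"
      "successively (\<lambda>x y. ((x, y) \<in> ?r \<or> (y, x) \<in> ?r) \<and> x \<noteq> y) ps"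
      and reach: "\<forall>x\<in>set ps. (u, x) \<in> ?r\<^sup>* \<or> (w, x) \<in> ?r\<^sup>*"
    using common_descendant_path[OF uz wz] by (elim exE conjE) simp
  have Ku: "(?K, u) \<in> ?r" and Kw: "(?K, w) \<in> ?r" using k args unfolding direct_rel_def by auto
  have ps_V: "set ps \<subseteq> ?V"
    using reach cg_vertices_arg_subset[OF k args(1)] cg_vertices_arg_subset[OF k args(2)]
    unfolding cg_vertices_def by blast
  have K_V: "?K \<in> ?V" unfolding cg_vertices_def by simp
  have "x < ?K" if "x \<in> set ps" for x
  proof -
    have "x \<le> u \<or> x \<le> w"
      using reach that cg_vertices_le[OF wf, of x u] cg_vertices_le[OF wf, of x w]
      unfolding cg_vertices_def by blast
    then show ?thesis using wf_construction_args_less[OF wf k] args(1,2) by fastforce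
  qed
  then have K_ps: "?K \<notin> set ps" by blast
  have edge: "{x, y} \<in> ?E" if "x \<in> ?V" "y \<in> ?V" "(x, y) \<in> ?r \<or> (y, x) \<in> ?r" for x y
    using that cg_edges_intro[of x N C ?K y] cg_edges_intro[of y N C ?K x] by (auto simp: insert_commute)
  have u_V: "u \<in> ?V" and w_V: "w \<in> ?V" using ps(1-3) ps_V by auto
  have "successively (\<lambda>x y. {x, y} \<in> ?E) ps"
    using ps(5) by (rule successively_mono) (use ps_V edge in blast)
  moreover have "hd ps \<noteq> last ps" using ps(2,3) args(3) by simp
  moreover have "{?K, hd ps} \<in> ?E" using ps(2) edge[OF K_V u_V] Ku by simp
  moreover have "{last ps, ?K} \<in> ?E" using ps(3) edge[OF w_V K_V] Kw by simp
  ultimately show False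
    using is_tree_no_cycle[OF tree[unfolded trop_admissible_def] K_V K_ps ps(1,4) ps_V] by blast
qed

section \<open>Genericity of the initial forms\<close>

lemma degree_sum_distinct_degrees:
  fixes q :: "'a \<Rightarrow> 'b::comm_ring_1 poly"
  assumes S: "finite S" "S \<noteq> {}" and nonzero: "\<And>s. s \<in> S \<Longrightarrow> q s \<noteq> 0"
    and inj: "inj_on (\<lambda>s. degree (q s)) S"
  shows "\<exists>s\<in>S. sum q S \<noteq> 0 \<and> degree (sum q S) = degree (q s)"
proof -
  have "Max ((\<lambda>s. degree (q s)) ` S) \<in> (\<lambda>s. degree (q s)) ` S" using S by (intro Max_in) auto
  then obtain s where s: "s \<in> S" "degree (q s) = Max ((\<lambda>s. degree (q s)) ` S)" by auto
  have less: "degree (q t) < degree (q s)" if "t \<in> S - {s}" for t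
  proof -
    have "degree (q t) \<le> degree (q s)" unfolding s(2) using S that by (intro Max_ge) auto
    moreover have "degree (q t) \<noteq> degree (q s)"
      using inj_onD[OF inj, of t s] s(1) that by blast
    ultimately show ?thesis by simp
  qed
  have split: "sum q S = q s + sum q (S - {s})" using S(1) s(1) by (simp add: sum.remove)
  show ?thesis
  proof (cases "S - {s} = {}")
    case True
    then have "S = {s}" using s(1) by auto
    then show ?thesis using nonzero by simp
  next
    case False
    then have pos: "0 < degree (q s)" using less by fastforce
    have "degree (sum q (S - {s})) < degree (q s)" using less pos by (rule degree_sum_less)
    then have deg: "degree (sum q S) = degree (q s)" unfolding split by (rule degree_add_eq_left)
    then have "sum q S \<noteq> 0" using pos by (metis degree_0 less_irrefl)
    then show ?thesis using deg s(1) by blast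
  qed
qed

lemma digit_sum_less:
  fixes B :: nat
  shows "(\<And>i. i < n \<Longrightarrow> a i < B) \<Longrightarrow> (\<Sum>i<n. a i * B ^ i) < B ^ n"
proof (induction n)
  case (Suc n)
  have "(\<Sum>i<Suc n. a i * B ^ i) < B ^ n + a n * B ^ n" using Suc by simp
  also have "\<dots> = (a n + 1) * B ^ n" by simp
  also have "\<dots> \<le> B * B ^ n" using Suc.prems[of n] by (intro mult_right_mono) auto
  finally show ?case by simp
qed simp

lemma digit_sum_inj:
  fixes B :: nat
  assumes "\<And>i. i < n \<Longrightarrow> a i < B" "\<And>i. i < n \<Longrightarrow> b i < B"
    and "(\<Sum>i<n. a i * B ^ i) = (\<Sum>i<n. b i * B ^ i)"
  shows "\<forall>i<n. a i = b i"
  using assms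
proof (induction n)
  case (Suc n)
  define Sa where "Sa = (\<Sum>i<n. a i * B ^ i)"
  define Sb where "Sb = (\<Sum>i<n. b i * B ^ i)"
  have less: "Sa < B ^ n" "Sb < B ^ n" unfolding Sa_def Sb_def using Suc.prems(1,2) by (auto intro: digit_sum_less)
  have eq: "Sa + a n * B ^ n = Sb + b n * B ^ n" using Suc.prems(3) unfolding Sa_def Sb_def by simp
  have div: "(x + y * q) div q = y" if "x < q" for x y q :: nat using that by simp
  have "a n = b n" using div[OF less(1), of "a n"] div[OF less(2), of "b n"] unfolding eq by simp
  then have "Sa = Sb" using eq by simp
  then have "\<forall>i<n. a i = b i"
    by (intro Suc.IH) (use Suc.prems(1,2) in \<open>auto simp: Sa_def Sb_def\<close>)
  then show ?case using \<open>a n = b n\<close> by (auto simp: less_Suc_eq)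
qed simp

lemma sum_disjoint_support:
  fixes V :: "nat \<Rightarrow> 'a \<Rightarrow> 'b::comm_monoid_add" and n :: nat
  assumes support: "\<And>r i. r < n \<Longrightarrow> V r i \<noteq> 0 \<Longrightarrow> i \<in> D r"
    and disjoint: "\<And>r r'. r < n \<Longrightarrow> r' < n \<Longrightarrow> r \<noteq> r' \<Longrightarrow> D r \<inter> D r' = {}"
  shows "r0 < n \<Longrightarrow> i \<in> D r0 \<Longrightarrow> (\<Sum>r=0..<n. V r i) = V r0 i"
    and "(\<forall>r<n. i \<notin> D r) \<Longrightarrow> (\<Sum>r=0..<n. V r i) = 0"
proof -
  assume r0: "r0 < n" and i: "i \<in> D r0"
  have "V r i = 0" if "r \<in> {0..<n} - {r0}" for r
    using that support[of r i] disjoint[of r r0] r0 i by auto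
  then have "(\<Sum>r\<in>{0..<n} - {r0}. V r i) = 0" by (intro sum.neutral) blast
  then show "(\<Sum>r=0..<n. V r i) = V r0 i" using r0 by (simp add: sum.remove)
next
  assume "\<forall>r<n. i \<notin> D r"
  then have "V r i = 0" if "r < n" for r using support[of r i] that by blast
  then show "(\<Sum>r=0..<n. V r i) = 0" by simp
qed

lemma perm_eq_if_skip_eq:
  assumes "\<sigma> permutes {0..<d}" "\<sigma>' permutes {0..<d}" "\<forall>r<d. skip j (\<sigma> r) = skip j (\<sigma>' r)"
  shows "\<sigma> = \<sigma>'"
proof
  fix r
  show "\<sigma> r = \<sigma>' r"
  proof (cases "r < d")
    case True
    then show ?thesis using assms(3) skip_inj by blast
  next
    case False
    then show ?thesis using permutes_not_in[OF assms(1)] permutes_not_in[OF assms(2)] by simp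
  qed
qed

text \<open>The columns used by a term of the Cramer minor j are all columns but j.\<close>

lemma skipped_eq_if_skip_eq:
  assumes \<sigma>: "\<sigma> permutes {0..<d}" and j: "j \<le> d" "j' \<le> d"
    and eq: "\<forall>r<d. skip j (\<sigma> r) = skip j' (\<sigma>' r)"
  shows "j = j'"
proof (rule ccontr)
  assume ne: "j \<noteq> j'"
  define c where "c = (if j' < j then j' else j' - 1)"
  have "c \<in> {0..<d}" "skip j c = j'" using ne j unfolding c_def skip_def by auto
  then have "c \<in> \<sigma> ` {0..<d}" using permutes_image[OF \<sigma>] by simp
  then obtain r where "r < d" "\<sigma> r = c" by auto
  have "skip j' (\<sigma>' r) = skip j (\<sigma> r)" using eq \<open>r < d\<close> by simp
  then have "skip j' (\<sigma>' r) = j'" using \<open>\<sigma> r = c\<close> \<open>skip j c = j'\<close> by simp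
  then show False using skip_neq by blast
qed

text \<open>Coordinate j of input i is replaced by M^(j (d+1)^i), so that the degree of a product of
  such monomials records in base d + 1 which coordinate of each input it uses.\<close>

definition input_monomial :: "nat \<Rightarrow> nat \<Rightarrow> nat \<Rightarrow> complex poly" where
  "input_monomial d i j = (if j \<le> d then monom 1 (j * Suc d ^ i) else 0)"

definition digit_pattern ::
  "nat \<Rightarrow> nat \<Rightarrow> nat set \<Rightarrow> (nat \<Rightarrow> complex poly) \<Rightarrow> (nat \<Rightarrow> nat \<Rightarrow> nat) \<Rightarrow> bool"
where
  "digit_pattern d N D g A \<longleftrightarrow>
     (\<forall>j\<le>d. g j \<noteq> 0 \<and> degree (g j) = (\<Sum>i<N. A j i * Suc d ^ i)) \<and>
     (\<forall>j\<le>d. \<forall>i. A j i \<noteq> 0 \<longrightarrow> i \<in> D \<and> i < N) \<and>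
     (\<forall>j\<le>d. \<forall>i. A j i \<le> d) \<and>
     inj_on A {..d}"

lemma digit_pattern_mono: "digit_pattern d N D g A \<Longrightarrow> D \<subseteq> D' \<Longrightarrow> digit_pattern d N D' g A"
  unfolding digit_pattern_def by blast

lemma digit_pattern_input_monomial:
  assumes "i < N"
  shows "digit_pattern d N {i} (input_monomial d i) (\<lambda>j i'. if i' = i then j else 0)"
proof -
  have "(\<Sum>i'<N. (if i' = i then j else 0) * Suc d ^ i') = j * Suc d ^ i" for j
  proof -
    have "(\<Sum>i'<N. (if i' = i then j else 0) * Suc d ^ i') = (\<Sum>i'<N. if i' = i then j * Suc d ^ i else 0)"
      by (rule sum.cong) auto
    then show ?thesis using assms by simp
  qed
  moreover have "inj_on (\<lambda>j i'. if i' = i then j else 0) {..d}"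
    by (rule inj_onI) (drule fun_cong[of _ _ i], simp)
  ultimately show ?thesis
    using assms unfolding digit_pattern_def input_monomial_def by (simp add: degree_monom_eq)
qed

context
  fixes d N :: nat and D :: "nat \<Rightarrow> nat set" and A :: "nat \<Rightarrow> nat \<Rightarrow> nat \<Rightarrow> nat"
    and g :: "nat \<Rightarrow> nat \<Rightarrow> complex poly"
  assumes pattern: "\<And>r. r < d \<Longrightarrow> digit_pattern d N (D r) (g r) (A r)"
    and disjoint: "\<And>r r'. r < d \<Longrightarrow> r' < d \<Longrightarrow> r \<noteq> r' \<Longrightarrow> D r \<inter> D r' = {}"
begin

lemma term_digit_support:
  assumes "\<sigma> permutes {0..<d}" "j \<le> d" "r < d" "A r (skip j (\<sigma> r)) i \<noteq> 0"
  shows "i \<in> D r \<and> i < N"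
  using pattern[OF assms(3)] skip_perm_le[OF assms(1-3)] assms(4) unfolding digit_pattern_def by blast

lemma term_digit_restrict:
  assumes "\<sigma> permutes {0..<d}" "j \<le> d" "r0 < d" "i \<in> D r0"
  shows "(\<Sum>r=0..<d. A r (skip j (\<sigma> r)) i) = A r0 (skip j (\<sigma> r0)) i"
  by (rule sum_disjoint_support(1)[where D = D, OF _ disjoint assms(3,4)]) (use term_digit_support[OF assms(1,2)] in blast)

lemma term_digit_zero:
  assumes "\<sigma> permutes {0..<d}" "j \<le> d" "\<forall>r<d. i \<notin> D r"
  shows "(\<Sum>r=0..<d. A r (skip j (\<sigma> r)) i) = 0"
  by (rule sum_disjoint_support(2)[where D = D, OF _ disjoint assms(3)]) (use term_digit_support[OF assms(1,2)] in blast)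

lemma term_digit_le:
  assumes "\<sigma> permutes {0..<d}" "j \<le> d"
  shows "(\<Sum>r=0..<d. A r (skip j (\<sigma> r)) i) \<le> d"
proof (cases "\<exists>r0<d. i \<in> D r0")
  case True
  then obtain r0 where "r0 < d" "i \<in> D r0" by blast
  then show ?thesis
    using term_digit_restrict[OF assms] pattern skip_perm_le[OF assms] unfolding digit_pattern_def by simp
qed (simp add: term_digit_zero[OF assms])

lemma term_digits_support:
  assumes "\<sigma> permutes {0..<d}" "j \<le> d" "(\<Sum>r=0..<d. A r (skip j (\<sigma> r)) i) \<noteq> 0"
  shows "\<exists>r<d. i \<in> D r \<and> i < N"
proof -
  obtain r where "r \<in> {0..<d}" "A r (skip j (\<sigma> r)) i \<noteq> 0"
    using sum.not_neutral_contains_not_neutral[OF assms(3)] .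
  then show ?thesis using term_digit_support[OF assms(1,2)] by auto
qed

text \<open>Since the D r are disjoint, the digits of a term determine the columns it uses.\<close>

lemma term_digits_determine_cols:
  assumes \<sigma>: "\<sigma> permutes {0..<d}" "j \<le> d" and \<sigma>': "\<sigma>' permutes {0..<d}" "j' \<le> d"
    and eq: "\<And>i. (\<Sum>r=0..<d. A r (skip j (\<sigma> r)) i) = (\<Sum>r=0..<d. A r (skip j' (\<sigma>' r)) i)"
    and r: "r < d"
  shows "skip j (\<sigma> r) = skip j' (\<sigma>' r)"
proof -
  have "A r (skip j (\<sigma> r)) i = A r (skip j' (\<sigma>' r)) i" for i
  proof (cases "i \<in> D r")
    case True
    then show ?thesis using eq[of i] term_digit_restrict[OF \<sigma> r] term_digit_restrict[OF \<sigma>' r] by simp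
  next
    case False
    then have "A r (skip j (\<sigma> r)) i = 0" "A r (skip j' (\<sigma>' r)) i = 0"
      using term_digit_support[OF \<sigma> r, of i] term_digit_support[OF \<sigma>' r, of i] by auto
    then show ?thesis by simp
  qed
  then show ?thesis
    using pattern[OF r] skip_perm_le[OF \<sigma> r] skip_perm_le[OF \<sigma>' r]
    unfolding digit_pattern_def inj_on_def by blast
qed

lemma perm_term_degree:
  assumes \<sigma>: "\<sigma> permutes {0..<d}" and j: "j \<le> d"
  shows "of_int (sign \<sigma>) * (\<Prod>r=0..<d. g r (skip j (\<sigma> r))) \<noteq> 0"
    and "degree (of_int (sign \<sigma>) * (\<Prod>r=0..<d. g r (skip j (\<sigma> r)))) =
           (\<Sum>i<N. (\<Sum>r=0..<d. A r (skip j (\<sigma> r)) i) * Suc d ^ i)"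
proof -
  have g: "g r (skip j (\<sigma> r)) \<noteq> 0 \<and> degree (g r (skip j (\<sigma> r))) = (\<Sum>i<N. A r (skip j (\<sigma> r)) i * Suc d ^ i)"
    if "r \<in> {0..<d}" for r
    using pattern skip_perm_le[OF \<sigma> j] that unfolding digit_pattern_def by simp
  have sign: "of_int (sign \<sigma>) = (1 :: complex poly) \<or> of_int (sign \<sigma>) = (-1 :: complex poly)"
    by (simp add: sign_def)
  show "of_int (sign \<sigma>) * (\<Prod>r=0..<d. g r (skip j (\<sigma> r))) \<noteq> 0"
    using sign g by auto
  have "degree (of_int (sign \<sigma>) * (\<Prod>r=0..<d. g r (skip j (\<sigma> r)))) = degree (\<Prod>r=0..<d. g r (skip j (\<sigma> r)))"
    using sign by auto
  also have "\<dots> = (\<Sum>r=0..<d. \<Sum>i<N. A r (skip j (\<sigma> r)) i * Suc d ^ i)"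
    using g by (simp add: degree_prod_eq_sum_degree)
  also have "\<dots> = (\<Sum>i<N. (\<Sum>r=0..<d. A r (skip j (\<sigma> r)) i) * Suc d ^ i)"
    by (simp add: sum_distrib_right sum.swap[of _ "{0..<d}"])
  finally show "degree (of_int (sign \<sigma>) * (\<Prod>r=0..<d. g r (skip j (\<sigma> r)))) =
      (\<Sum>i<N. (\<Sum>r=0..<d. A r (skip j (\<sigma> r)) i) * Suc d ^ i)" .
qed

text \<open>Distinct permutations give terms of distinct degrees, so a nonempty sum of terms cannot
  cancel.\<close>

lemma perm_terms_sum_degree:
  assumes Os: "Os \<subseteq> {\<sigma>. \<sigma> permutes {0..<d}}" "finite Os" "Os \<noteq> {}" and j: "j \<le> d"
  shows "\<exists>\<sigma>\<in>Os. (\<Sum>\<tau>\<in>Os. of_int (sign \<tau>) * (\<Prod>r=0..<d. g r (skip j (\<tau> r)))) \<noteq> 0 \<and>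
           degree (\<Sum>\<tau>\<in>Os. of_int (sign \<tau>) * (\<Prod>r=0..<d. g r (skip j (\<tau> r)))) =
           (\<Sum>i<N. (\<Sum>r=0..<d. A r (skip j (\<sigma> r)) i) * Suc d ^ i)"
proof -
  let ?t = "\<lambda>\<tau>. of_int (sign \<tau>) * (\<Prod>r=0..<d. g r (skip j (\<tau> r))) :: complex poly"
  let ?digits = "\<lambda>\<tau> i. \<Sum>r=0..<d. A r (skip j (\<tau> r)) i"
  have "inj_on (\<lambda>\<tau>. degree (?t \<tau>)) Os"
  proof (rule inj_onI)
    fix \<sigma> \<tau> assume "\<sigma> \<in> Os" "\<tau> \<in> Os" and deg: "degree (?t \<sigma>) = degree (?t \<tau>)"
    then have \<sigma>: "\<sigma> permutes {0..<d}" and \<tau>: "\<tau> permutes {0..<d}" using Os(1) by auto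
    have "(\<Sum>i<N. ?digits \<sigma> i * Suc d ^ i) = (\<Sum>i<N. ?digits \<tau> i * Suc d ^ i)"
      using deg perm_term_degree(2)[OF \<sigma> j] perm_term_degree(2)[OF \<tau> j] by simp
    then have "\<forall>i<N. ?digits \<sigma> i = ?digits \<tau> i"
      by (intro digit_sum_inj) (use term_digit_le[OF \<sigma> j] term_digit_le[OF \<tau> j] in \<open>auto simp: less_Suc_eq_le\<close>)
    moreover have "?digits \<sigma> i = 0 \<and> ?digits \<tau> i = 0" if "\<not> i < N" for i
      using term_digits_support[OF \<sigma> j, of i] term_digits_support[OF \<tau> j, of i] that by blast
    ultimately have "?digits \<sigma> i = ?digits \<tau> i" for i by (cases "i < N") auto
    then show "\<sigma> = \<tau>"
      using perm_eq_if_skip_eq[OF \<sigma> \<tau>] term_digits_determine_cols[OF \<sigma> j \<tau> j] by blast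
  qed
  then obtain \<sigma> where "\<sigma> \<in> Os" "sum ?t Os \<noteq> 0" "degree (sum ?t Os) = degree (?t \<sigma>)"
    using degree_sum_distinct_degrees[OF Os(2,3), of ?t] perm_term_degree(1)[OF _ j] Os(1) by blast
  then show ?thesis using perm_term_degree(2)[OF _ j] Os(1) by auto
qed

lemma cramer_initial_degree:
  assumes j: "j \<le> d"
  shows "\<exists>\<sigma>. \<sigma> permutes {0..<d} \<and> cramer_initial d ts (map g [0..<d]) j \<noteq> 0 \<and>
           degree (cramer_initial d ts (map g [0..<d]) j) =
             (\<Sum>i<N. (\<Sum>r=0..<d. A r (skip j (\<sigma> r)) i) * Suc d ^ i)"
proof -
  let ?opt = "opt_perms d (\<lambda>r c. (ts ! r) (skip j c))"
  let ?sum = "\<Sum>\<tau>\<in>?opt. of_int (sign \<tau>) * (\<Prod>r=0..<d. g r (skip j (\<tau> r)))"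
  have cramer: "cramer_initial d ts (map g [0..<d]) j = (if even j then 1 else -1) * ?sum"
    using j by (auto simp: cramer_initial_def intro!: sum.cong prod.cong)
  have "?opt \<subseteq> {\<sigma>. \<sigma> permutes {0..<d}}" using opt_perms_permutes by blast
  from perm_terms_sum_degree[OF this finite_opt_perms opt_perms_nonempty j]
  obtain \<sigma> where "\<sigma> \<in> ?opt" "?sum \<noteq> 0"
    "degree ?sum = (\<Sum>i<N. (\<Sum>r=0..<d. A r (skip j (\<sigma> r)) i) * Suc d ^ i)"
    by blast
  then show ?thesis using opt_perms_permutes by (auto simp: cramer)
qed

lemma digit_pattern_cramer_initial:
  "\<exists>A'. digit_pattern d N (\<Union>r<d. D r) (cramer_initial d ts (map g [0..<d])) A'"
proof -
  have "\<forall>j. \<exists>\<sigma>. j \<le> d \<longrightarrow> \<sigma> permutes {0..<d} \<and> cramer_initial d ts (map g [0..<d]) j \<noteq> 0 \<and>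
      degree (cramer_initial d ts (map g [0..<d]) j) = (\<Sum>i<N. (\<Sum>r=0..<d. A r (skip j (\<sigma> r)) i) * Suc d ^ i)"
    using cramer_initial_degree by blast
  from choice[OF this] obtain S where S: "\<And>j. j \<le> d \<Longrightarrow> S j permutes {0..<d} \<and>
      cramer_initial d ts (map g [0..<d]) j \<noteq> 0 \<and>
      degree (cramer_initial d ts (map g [0..<d]) j) = (\<Sum>i<N. (\<Sum>r=0..<d. A r (skip j (S j r)) i) * Suc d ^ i)"
    by blast
  have S_perm: "S j permutes {0..<d}" if "j \<le> d" for j using S[OF that] by blast
  define A' where "A' j i = (\<Sum>r=0..<d. A r (skip j (S j r)) i)" for j i
  show ?thesis
  proof (intro exI[of _ A'], unfold digit_pattern_def, intro conjI allI impI)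
    fix j assume j: "j \<le> d"
    show "cramer_initial d ts (map g [0..<d]) j \<noteq> 0"
      "degree (cramer_initial d ts (map g [0..<d]) j) = (\<Sum>i<N. A' j i * Suc d ^ i)"
      using S[OF j] by (simp_all add: A'_def)
    show "A' j i \<le> d" for i unfolding A'_def by (rule term_digit_le[OF S_perm[OF j] j])
    show "i \<in> (\<Union>r<d. D r)" "i < N" if "A' j i \<noteq> 0" for i
      using term_digits_support[OF S_perm[OF j] j] that unfolding A'_def by blast+
  next
    show "inj_on A' {..d}"
    proof (rule inj_onI)
      fix j j' assume "j \<in> {..d}" "j' \<in> {..d}" and eq: "A' j = A' j'"
      then have j: "j \<le> d" "j' \<le> d" by auto
      have "\<forall>r<d. skip j (S j r) = skip j' (S j' r)"
        using term_digits_determine_cols[OF S_perm[OF j(1)] j(1) S_perm[OF j(2)] j(2)] eq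
        unfolding A'_def by (simp add: fun_eq_iff)
      then show "j = j'" by (rule skipped_eq_if_skip_eq[OF S_perm[OF j(1)] j])
    qed
  qed
qed

end

lemma eval_initial_digit_pattern:
  assumes wf: "wf_construction d N C kind"
    and args_disjoint: "\<And>k r r'. k < length C \<Longrightarrow> r < d \<Longrightarrow> r' < d \<Longrightarrow> r \<noteq> r' \<Longrightarrow>
          cg_vertices N C (C ! k ! r) \<inter> cg_vertices N C (C ! k ! r') = {}"
    and e: "e < N + length C"
  shows "\<exists>A. digit_pattern d N (cg_vertices N C e) (eval_initial d N C p (input_monomial d) ! e) A"
  using wf e
proof (induction e rule: construction_induct)
  case (input i)
  have "digit_pattern d N (cg_vertices N C i) (input_monomial d i) (\<lambda>j i'. if i' = i then j else 0)"
    by (rule digit_pattern_mono[OF digit_pattern_input_monomial[OF input]]) (simp add: cg_vertices_def)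
  then show ?case using input by (auto simp: eval_initial_nth_input)
next
  case (step k)
  let ?G = "eval_initial d N C p (input_monomial d)" and ?a = "\<lambda>r. C ! k ! r"
  have len: "length (C ! k) = d" by (rule wf_construction_length_args[OF wf step.hyps])
  have "\<forall>r. \<exists>A. r < d \<longrightarrow> digit_pattern d N (cg_vertices N C (?a r)) (?G ! ?a r) A"
  proof
    fix r
    show "\<exists>A. r < d \<longrightarrow> digit_pattern d N (cg_vertices N C (?a r)) (?G ! ?a r) A"
      using step.IH[OF nth_mem, of r] len by (cases "r < d") auto
  qed
  from choice[OF this] obtain A
    where A: "\<And>r. r < d \<Longrightarrow> digit_pattern d N (cg_vertices N C (?a r)) (?G ! ?a r) (A r)"
    by blast
  obtain A' where A': "digit_pattern d N (\<Union>r<d. cg_vertices N C (?a r))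
      (cramer_initial d (map ((!) (evalT d N C p)) (C ! k)) (map (\<lambda>r. ?G ! ?a r) [0..<d])) A'"
  proof -
    have "cg_vertices N C (?a r) \<inter> cg_vertices N C (?a r') = {}" if "r < d" "r' < d" "r \<noteq> r'" for r r'
      using args_disjoint[OF step.hyps that] .
    from digit_pattern_cramer_initial[where D = "\<lambda>r. cg_vertices N C (?a r)" and g = "\<lambda>r. ?G ! ?a r",
        OF A this]
    show ?thesis using that by blast
  qed
  have "map (\<lambda>r. ?G ! ?a r) [0..<d] = map ((!) ?G) (C ! k)"
    using len by (intro nth_equalityI) simp_all
  then have G: "?G ! (N + k) = cramer_initial d (map ((!) (evalT d N C p)) (C ! k)) (map (\<lambda>r. ?G ! ?a r) [0..<d])"
    by (simp add: eval_initial_nth_step[OF wf step.hyps])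
  have "cg_vertices N C (?a r) \<subseteq> cg_vertices N C (N + k)" if "r < d" for r
    by (rule cg_vertices_arg_subset[OF step.hyps nth_mem]) (use len that in simp)
  then have "(\<Union>r<d. cg_vertices N C (?a r)) \<subseteq> cg_vertices N C (N + k)" by blast
  from digit_pattern_mono[OF A' this] show ?case unfolding G by blast
qed

lemma eval_initial_input_monomial_nonzero:
  assumes wf: "wf_construction d N C kind"
    and performable: "\<exists>P. (\<forall>i<N. proj_pointK d (P i)) \<and> meaningful d N C P"
    and admissible: "\<forall>k<length C. trop_admissible N C (N + k)"
    and k: "k < length C" and j: "j \<le> d"
  shows "(eval_initial d N C p (input_monomial d) ! (N + k)) j \<noteq> 0"
proof -
  obtain P where P: "\<forall>i<N. proj_pointK d (P i)" "meaningful d N C P" using performable by blast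
  have disjoint: "cg_vertices N C (C ! k ! r) \<inter> cg_vertices N C (C ! k ! r') = {}"
    if "k < length C" "r < d" "r' < d" "r \<noteq> r'" for k r r'
  proof -
    have "C ! k ! r \<in> set (C ! k)" "C ! k ! r' \<in> set (C ! k)"
      using that wf_construction_length_args[OF wf that(1)] by auto
    moreover have "C ! k ! r \<noteq> C ! k ! r'" by (rule meaningful_args_distinct[OF wf P that])
    ultimately show ?thesis using cg_vertices_args_disjoint[OF wf that(1)] admissible that(1) by blast
  qed
  obtain A where "digit_pattern d N (cg_vertices N C (N + k)) (eval_initial d N C p (input_monomial d) ! (N + k)) A"
    using eval_initial_digit_pattern[OF wf disjoint, of "N + k"] k by auto
  then show ?thesis using j unfolding digit_pattern_def by blast
qed

lemma eval_initial_cong: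
  assumes "\<forall>i<N. X i = Y i"
  shows "eval_initial d N C p X = eval_initial d N C p Y"
proof -
  have "map X [0..<N] = map Y [0..<N]" using assms by simp
  then show ?thesis unfolding eval_initial_def by (simp only:)
qed

lemma eval_initial_poly:
  assumes wf: "wf_construction d N C kind" and e: "e < N + length C"
  shows "eval_initial d N C p (\<lambda>i j. poly (X i j) M) ! e = (\<lambda>j. poly ((eval_initial d N C p X ! e) j) M)"
  using wf e
proof (induction e rule: construction_induct)
  case (input i)
  then show ?case by (simp add: eval_initial_nth_input)
next
  case (step k)
  then show ?case
    using wf_construction_length_args[OF wf step.hyps]
    by (auto simp: eval_initial_nth_step[OF wf step.hyps] cramer_initial_def poly_sum poly_prod
        intro!: sum.cong prod.cong)
qed

lemma exists_generic_torus_point: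
  assumes wf: "wf_construction d N C kind"
    and performable: "\<exists>P. (\<forall>i<N. proj_pointK d (P i)) \<and> meaningful d N C P"
    and admissible: "\<forall>k<length C. trop_admissible N C (N + k)"
  shows "\<exists>x\<in>torus_tuples d N. \<forall>k<length C. \<forall>j\<le>d.
           (eval_initial d N C p (\<lambda>i. torus_hom (x i)) ! (N + k)) j \<noteq> 0"
proof -
  define Q where "Q = (\<lambda>(k, j). (eval_initial d N C p (input_monomial d) ! (N + k)) j) ` ({..<length C} \<times> {..d})"
  have "finite Q" "0 \<notin> Q"
    using eval_initial_input_monomial_nonzero[OF wf performable admissible] unfolding Q_def by auto
  then have "finite (insert 0 (\<Union>q\<in>Q. {z. poly q z = 0}))" by (auto intro: poly_roots_finite)
  then obtain M :: complex where M: "M \<notin> insert 0 (\<Union>q\<in>Q. {z. poly q z = 0})"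
    using ex_new_if_finite[OF infinite_UNIV_char_0] by blast
  define x where "x i j = (if i < N \<and> j < d then M ^ (Suc j * Suc d ^ i) else 0)" for i j
  have x: "x \<in> torus_tuples d N" unfolding torus_tuples_def x_def using M by auto
  have "torus_hom (x i) = (\<lambda>j. poly (input_monomial d i j) M)" if "i < N" for i
    using that by (auto simp: fun_eq_iff torus_hom_def x_def input_monomial_def poly_monom split: nat.split)
  then have "eval_initial d N C p (\<lambda>i. torus_hom (x i)) = eval_initial d N C p (\<lambda>i j. poly (input_monomial d i j) M)"
    by (intro eval_initial_cong) simp
  moreover have "poly ((eval_initial d N C p (input_monomial d) ! (N + k)) j) M \<noteq> 0"
    if "k < length C" "j \<le> d" for k j
  proof -
    have "(eval_initial d N C p (input_monomial d) ! (N + k)) j \<in> Q" unfolding Q_def using that by force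
    then show ?thesis using M by blast
  qed
  ultimately have "(eval_initial d N C p (\<lambda>i. torus_hom (x i)) ! (N + k)) j \<noteq> 0"
    if "k < length C" "j \<le> d" for k j
    using that eval_initial_poly[OF wf, of "N + k" p "input_monomial d" M] by simp
  then show ?thesis using x by blast
qed

theorem theorem2p12:
  fixes d N :: nat and C :: "nat list list" and kind :: "nat \<Rightarrow> bool"
    and p :: "nat \<Rightarrow> nat \<Rightarrow> real"
  assumes wf: "wf_construction d N C kind"
    and performable: "\<exists>P. (\<forall>i<N. proj_pointK d (P i)) \<and> meaningful d N C P"
    and admissible: "\<forall>k<length C. trop_admissible N C (N + k)"
  shows "\<exists>U. U \<noteq> {} \<and> U \<subseteq> torus_tuples d N \<and>
           (\<forall>x\<in>U. \<exists>P. is_lift d N P p \<and> has_Pc d N P x \<and> meaningful d N C P) \<and>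
           (\<forall>P x. is_lift d N P p \<and> x \<in> U \<and> has_Pc d N P x \<longrightarrow>
              meaningful d N C P \<and>
              (\<forall>k<length C.
                 (\<forall>j\<le>d. (evalK d N C P ! (N + k)) j \<noteq> szero) \<and>
                 trop_proj_eq d (\<lambda>j. trop ((evalK d N C P ! (N + k)) j))
                               (evalT d N C p ! (N + k))))"
proof -
  define U where "U = {x \<in> torus_tuples d N. \<forall>k<length C. \<forall>j\<le>d.
    (eval_initial d N C p (\<lambda>i. torus_hom (x i)) ! (N + k)) j \<noteq> 0}"
  have tropicalizes: "(\<forall>j\<le>d. (evalK d N C P ! (N + k)) j \<noteq> szero) \<and>
      trop_proj_eq d (\<lambda>j. trop ((evalK d N C P ! (N + k)) j)) (evalT d N C p ! (N + k))"
    if "is_lift d N P p" "x \<in> U" "has_Pc d N P x" "k < length C" for P x k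
    using evalK_tropicalizes[OF wf that(1,3)] that(2,4) unfolding U_def by simp
  then have meaningful: "meaningful d N C P" if "is_lift d N P p" "x \<in> U" "has_Pc d N P x" for P x
    using that unfolding meaningful_def by (meson order_refl)
  show ?thesis
  proof (intro exI[of _ U] conjI ballI allI impI)
    show "U \<noteq> {}" using exists_generic_torus_point[OF wf performable admissible] unfolding U_def by blast
    show "U \<subseteq> torus_tuples d N" unfolding U_def by blast
  next
    fix x assume "x \<in> U"
    then obtain P where "is_lift d N P p" "has_Pc d N P x"
      using exists_lift_with_Pc[of x d N p] unfolding U_def by blast
    then show "\<exists>P. is_lift d N P p \<and> has_Pc d N P x \<and> meaningful d N C P"
      using meaningful \<open>x \<in> U\<close> by blast
  qed (use meaningful tropicalizes in blast)+
qed

end
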